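(* There is a universal constant $C$ such that for every $T$ and every sequence of outcomes $\mathbf x\in\{0,1\}^T$ fixed in advance, the forecasts $\mathbf p$ produced by the algorithm ForecastHedge satisfy $\mathbb E[\mathrm{VCal}(\mathbf p,\mathbf x)]\le C\sqrt T$, i.e. $\mathbb E[\mathrm{VCal}(\mathbf p,\mathbf x)]=O(\sqrt T)$.
   Context: ForecastHedge: let $S(z)=e^z/(e^z+e^{-z})$ and $\eta=1/\sqrt T$. Predict $p_1=1/2$. For $t=2,\dots,T$, let $\hat x_{t-1}=\frac1{t-1}\sum_{s=1}^{t-1}x_s$ and sample $p_t\in[0,1]$ (independently of previous randomness) from the distribution with $\Pr[p_t\le v]=S(\eta(t-1)(v-\hat x_{t-1}))$ for all $v\in[0,1)$ (and $\Pr[p_t\le 1]=1$); then observe $x_t$. For $\beta=\frac1T\sum_tx_t$ and a scoring rule $\ell:[0,1]\times\{0,1\}\to\mathbb R$, $\mathrm{Reg}_\ell(\mathbf p,\mathbf x)=\sum_t\ell(p_t,x_t)-\sum_t\ell(\beta,x_t)$. For $v\in[0,1]$, the V-shaped scoring rule is $\ell_v(p,0)=v\,\mathrm{sgn}(p-v)$, $\ell_v(p,1)=(1-v)\,\mathrm{sgn}(v-p)$ with $\mathrm{sgn}(0)=0$, and $\mathrm{VCal}(\mathbf p,\mathbf x)=\sup_{v\in[0,1]}\mathrm{Reg}_{\ell_v}(\mathbf p,\mathbf x)$. *)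

theory Defs
  imports "HOL-Probability.Probability"
begin

text \<open>Outcomes x t and forecasts p t are indexed by rounds t = 1..T.\<close>

definition S :: "real \<Rightarrow> real" where
  "S z = exp z / (exp z + exp (- z))"

definition eta :: "nat \<Rightarrow> real" where
  "eta T = 1 / sqrt (real T)"

definition xhat :: "(nat \<Rightarrow> real) \<Rightarrow> nat \<Rightarrow> real" where
  "xhat x s = (\<Sum>i=1..s. x i) / real s"

text \<open>CDF of the forecast p_t of ForecastHedge (p_1 = 1/2 deterministically;
  for t >= 2: Pr[p_t <= v] = S(eta (t-1) (v - xhat_{t-1})) for v in [0,1),
  Pr[p_t <= 1] = 1, and p_t in [0,1], so Pr[p_t <= v] = 0 for v < 0).\<close>
definition fh_cdf :: "nat \<Rightarrow> (nat \<Rightarrow> real) \<Rightarrow> nat \<Rightarrow> real \<Rightarrow> real" where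
  "fh_cdf T x t v =
     (if t = 1 then (if v < 1/2 then 0 else 1)
      else if v < 0 then 0
      else if v < 1 then S (eta T * real (t - 1) * (v - xhat x (t - 1)))
      else 1)"

definition fh_dist :: "nat \<Rightarrow> (nat \<Rightarrow> real) \<Rightarrow> nat \<Rightarrow> real measure" where
  "fh_dist T x t = interval_measure (fh_cdf T x t)"

definition fh_measure :: "nat \<Rightarrow> (nat \<Rightarrow> real) \<Rightarrow> (nat \<Rightarrow> real) measure" where
  "fh_measure T x = PiM {1..T} (\<lambda>t. fh_dist T x t)"

text \<open>V-shaped scoring rule; sgn 0 = 0 in Isabelle.\<close>
definition ell_V :: "real \<Rightarrow> real \<Rightarrow> real \<Rightarrow> real" where
  "ell_V v p y = (if y = 1 then (1 - v) * sgn (v - p) else v * sgn (p - v))"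

definition beta :: "nat \<Rightarrow> (nat \<Rightarrow> real) \<Rightarrow> real" where
  "beta T x = (\<Sum>t=1..T. x t) / real T"

definition Reg :: "(real \<Rightarrow> real \<Rightarrow> real) \<Rightarrow> nat \<Rightarrow> (nat \<Rightarrow> real) \<Rightarrow> (nat \<Rightarrow> real) \<Rightarrow> real" where
  "Reg l T p x = (\<Sum>t=1..T. l (p t) (x t)) - (\<Sum>t=1..T. l (beta T x) (x t))"

definition VCal :: "nat \<Rightarrow> (nat \<Rightarrow> real) \<Rightarrow> (nat \<Rightarrow> real) \<Rightarrow> real" where
  "VCal T p x = (SUP v\<in>{0..1}. Reg (ell_V v) T p x)"

end

theory Submission
  imports Defs "HOL-Library.Discrete_Functions"
begin

text \<open>
  For binary outcomes the V-shaped regret at threshold \<open>v\<close> is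
  \<open>\<Sum>t. sgn (p t - v) * (v - x t) + \<bar>\<Sum>t. v - x t\<bar>\<close>, and \<open>sgn (p - v) = 1 - [p \<le> v] - [p < v]\<close>.
  Replacing the two indicators by their probabilities splits the regret into a deterministic
  part and a fluctuation.  The deterministic part is the regret of Hedge with two experts and
  learning rate \<open>\<eta>\<close> on the losses \<open>\<plusminus>(v - x t)\<close>, because the forecast distribution at \<open>v\<close> is the
  logistic function of \<open>\<eta>\<close> times the cumulative loss difference; the potential
  \<open>ln (exp (\<eta> z) + exp (- \<eta> z))\<close> bounds it by \<open>O(\<surd>T)\<close>, uniformly in \<open>v\<close>.  The fluctuation is a
  weighted empirical distribution function of the independent forecasts minus its mean.  Its
  supremum over \<open>v\<close> is controlled by chaining along a dyadic grid that is uniform for the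
  expected mass, with fourth moments of sums of independent centred indicators at every level;
  this gives expectation \<open>O(\<surd>T)\<close>.  Measurability holds because the supremum defining VCal may
  be taken over rational thresholds.
\<close>

section \<open>The forecast distributions\<close>

lemma S_altdef: "S z = 1 / (1 + exp (-2 * z))"
proof -
  have "S z = 1 / (1 + exp (-z) / exp z)"
    unfolding S_def by (simp add: field_simps add_pos_pos)
  also have "exp (-z) / exp z = exp (-2 * z)"
    by (simp add: exp_diff[symmetric])
  finally show ?thesis .
qed

lemma S_nonneg: "0 \<le> S z"
  unfolding S_def by (simp add: add_pos_pos)

lemma S_le_1: "S z \<le> 1"
  unfolding S_def by (simp add: add_pos_pos)

lemma S_mono: "z \<le> w \<Longrightarrow> S z \<le> S w"
  unfolding S_altdef by (rule divide_left_mono) (auto intro!: add_pos_pos mult_pos_pos)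

lemma isCont_S: "isCont S z"
  unfolding S_altdef using add_pos_pos[OF zero_less_one exp_gt_zero[of "-2 * z"]]
  by (intro continuous_intros) simp

text \<open>With \<open>a = b\<close> this is the distribution function of the point mass at \<open>a\<close>; this covers the
  deterministic first forecast \<open>p 1 = 1/2\<close>.\<close>

definition clamped_cdf :: "real \<Rightarrow> real \<Rightarrow> (real \<Rightarrow> real) \<Rightarrow> real \<Rightarrow> real" where
  "clamped_cdf a b g v = (if v < a then 0 else if v < b then g v else 1)"

lemma
  assumes "a \<le> b" "mono g" "\<And>v. isCont g v" "\<And>v. 0 \<le> g v \<and> g v \<le> 1"
  shows mono_clamped_cdf: "mono (clamped_cdf a b g)"
    and continuous_at_right_clamped_cdf: "continuous (at_right v) (clamped_cdf a b g)"
    and tendsto_at_left_clamped_cdf: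
      "(clamped_cdf a b g \<longlongrightarrow> (if v \<le> a then 0 else if v \<le> b then g v else 1)) (at_left v)"
    and tendsto_at_bot_clamped_cdf: "(clamped_cdf a b g \<longlongrightarrow> 0) at_bot"
    and tendsto_at_top_clamped_cdf: "(clamped_cdf a b g \<longlongrightarrow> 1) at_top"
proof -
  show "mono (clamped_cdf a b g)"
    using assms(1,2,4) by (auto simp: mono_def clamped_cdf_def intro: order.trans)
  have g_left: "(g \<longlongrightarrow> g v) (at_left v)" and g_right: "(g \<longlongrightarrow> g v) (at_right v)"
    using assms(3)[of v] by (simp_all add: isCont_def filterlim_at_split)
  have "\<forall>\<^sub>F u in at_right v. (if v < a then 0 else if v < b then g u else 1) = clamped_cdf a b g u"
    unfolding eventually_at_right_field
    by (rule exI[of _ "if v < a then a else if v < b then b else v + 1"]) (auto simp: clamped_cdf_def)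
  moreover have "((\<lambda>u. if v < a then 0 else if v < b then g u else 1) \<longlongrightarrow> clamped_cdf a b g v) (at_right v)"
    using g_right by (simp add: clamped_cdf_def)
  ultimately show "continuous (at_right v) (clamped_cdf a b g)"
    unfolding continuous_within by (rule Lim_transform_eventually[rotated])
  have "\<forall>\<^sub>F u in at_left v. (if v \<le> a then 0 else if v \<le> b then g u else 1) = clamped_cdf a b g u"
    unfolding eventually_at_left_field
    by (rule exI[of _ "if v \<le> a then v - 1 else if v \<le> b then a else max a b"]) (auto simp: clamped_cdf_def)
  moreover have "((\<lambda>u. if v \<le> a then 0 else if v \<le> b then g u else 1)
      \<longlongrightarrow> (if v \<le> a then 0 else if v \<le> b then g v else 1)) (at_left v)"
    using g_left by simp
  ultimately show "(clamped_cdf a b g \<longlongrightarrow> (if v \<le> a then 0 else if v \<le> b then g v else 1)) (at_left v)"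
    by (rule Lim_transform_eventually[rotated])
  have "\<forall>\<^sub>F u in at_bot. clamped_cdf a b g u = 0"
    unfolding eventually_at_bot_linorder by (rule exI[of _ "a - 1"]) (auto simp: clamped_cdf_def)
  then show "(clamped_cdf a b g \<longlongrightarrow> 0) at_bot" by (rule tendsto_eventually)
  have "\<forall>\<^sub>F u in at_top. clamped_cdf a b g u = 1"
    unfolding eventually_at_top_linorder by (rule exI[of _ "max a b"]) (auto simp: clamped_cdf_def)
  then show "(clamped_cdf a b g \<longlongrightarrow> 1) at_top" by (rule tendsto_eventually)
qed

lemma measure_interval_measure_lessThan:
  fixes F :: "real \<Rightarrow> real"
  assumes "mono F" "\<And>v. continuous (at_right v) F" "(F \<longlongrightarrow> 0) at_bot" "(F \<longlongrightarrow> 1) at_top"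
    and "(F \<longlongrightarrow> l) (at_left v)"
  shows "measure (interval_measure F) {..<v} = l"
proof -
  interpret real_distribution "interval_measure F"
    using assms(1-4) by (intro real_distribution_interval_measure) (auto dest: monoD)
  have "cdf (interval_measure F) = F"
    using assms(1-3) by (intro cdf_interval_measure) (auto dest: monoD)
  then have "(F \<longlongrightarrow> measure (interval_measure F) {..<v}) (at_left v)"
    using cdf_at_left[of v] by simp
  from tendsto_unique[OF _ this assms(5)] show ?thesis
    by (simp add: trivial_limit_at_left_real)
qed

definition fh_cdf_core :: "nat \<Rightarrow> (nat \<Rightarrow> real) \<Rightarrow> nat \<Rightarrow> real \<Rightarrow> real" where
  "fh_cdf_core T x t v = S (eta T * real (t - 1) * (v - xhat x (t - 1)))"

lemma mono_fh_cdf_core: "mono (fh_cdf_core T x t)"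
  unfolding fh_cdf_core_def eta_def by (intro monoI S_mono mult_left_mono) auto

lemma isCont_fh_cdf_core: "isCont (fh_cdf_core T x t) v"
  unfolding fh_cdf_core_def by (intro continuous_intros isCont_o2[OF _ isCont_S])

lemma fh_cdf_core_bounds: "0 \<le> fh_cdf_core T x t v \<and> fh_cdf_core T x t v \<le> 1"
  unfolding fh_cdf_core_def by (simp add: S_nonneg S_le_1)

lemma fh_cdf_eq_clamped_cdf:
  "fh_cdf T x t = (if t = 1 then clamped_cdf (1/2) (1/2) (fh_cdf_core T x t)
                   else clamped_cdf 0 1 (fh_cdf_core T x t))"
  by (auto simp: fun_eq_iff fh_cdf_def clamped_cdf_def fh_cdf_core_def)

lemma
  shows mono_fh_cdf: "mono (fh_cdf T x t)"
    and continuous_at_right_fh_cdf: "continuous (at_right v) (fh_cdf T x t)"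
    and tendsto_at_bot_fh_cdf: "(fh_cdf T x t \<longlongrightarrow> 0) at_bot"
    and tendsto_at_top_fh_cdf: "(fh_cdf T x t \<longlongrightarrow> 1) at_top"
  using mono_clamped_cdf continuous_at_right_clamped_cdf tendsto_at_bot_clamped_cdf
    tendsto_at_top_clamped_cdf
  by (simp_all add: fh_cdf_eq_clamped_cdf mono_fh_cdf_core isCont_fh_cdf_core fh_cdf_core_bounds)

lemma tendsto_at_left_fh_cdf:
  "(fh_cdf T x t \<longlongrightarrow> (if t = 1 then (if v \<le> 1/2 then 0 else 1)
      else if v \<le> 0 then 0 else if v \<le> 1 then fh_cdf_core T x t v else 1)) (at_left v)"
proof -
  note left = tendsto_at_left_clamped_cdf[OF _ mono_fh_cdf_core isCont_fh_cdf_core fh_cdf_core_bounds]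
  show ?thesis
    using left[of "1/2" "1/2" T x t v] left[of 0 1 T x t v]
    by (cases "t = 1"; cases "v \<le> 1/2") (simp_all add: fh_cdf_eq_clamped_cdf)
qed

lemma real_distribution_fh_dist: "real_distribution (fh_dist T x t)"
  unfolding fh_dist_def
  by (intro real_distribution_interval_measure monoD[OF mono_fh_cdf] continuous_at_right_fh_cdf
      tendsto_at_bot_fh_cdf tendsto_at_top_fh_cdf)

lemma prob_space_fh_dist: "prob_space (fh_dist T x t)"
  using real_distribution_fh_dist by (rule real_distribution.axioms)

lemma sets_fh_dist [simp, measurable_cong]: "sets (fh_dist T x t) = sets borel"
  using real_distribution_fh_dist by (rule real_distribution.events_eq_borel)

lemma measure_fh_dist_atMost: "measure (fh_dist T x t) {..v} = fh_cdf T x t v"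
  unfolding fh_dist_def
  by (intro measure_interval_measure_Iic monoD[OF mono_fh_cdf] continuous_at_right_fh_cdf
      tendsto_at_bot_fh_cdf)

lemma measure_fh_dist_lessThan:
  "measure (fh_dist T x t) {..<v} = (if t = 1 then (if v \<le> 1/2 then 0 else 1)
      else if v \<le> 0 then 0 else if v \<le> 1 then fh_cdf_core T x t v else 1)"
  unfolding fh_dist_def
  by (intro measure_interval_measure_lessThan mono_fh_cdf continuous_at_right_fh_cdf
      tendsto_at_bot_fh_cdf tendsto_at_top_fh_cdf tendsto_at_left_fh_cdf)

lemma prob_space_fh_measure: "prob_space (fh_measure T x)"
  unfolding fh_measure_def by (intro prob_space_PiM prob_space_fh_dist)

section \<open>Moments of sums of independent variables\<close>

lemma abs_sum_le_card:
  fixes f :: "'a \<Rightarrow> real"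
  assumes "\<And>t. t \<in> A \<Longrightarrow> \<bar>f t\<bar> \<le> 1"
  shows "\<bar>sum f A\<bar> \<le> real (card A)"
  using order.trans[OF sum_abs sum_bounded_above[of A "\<lambda>t. \<bar>f t\<bar>" 1]] assms by simp

lemma sqrt_sqrt_power4:
  assumes "0 \<le> y" shows "sqrt (sqrt y) ^ 4 = y"
proof -
  have "sqrt (sqrt y) ^ 4 = (sqrt (sqrt y) ^ 2) ^ 2"
    by (simp flip: power_mult)
  then show ?thesis
    using assms by simp
qed

lemma sqrt_sqrt_power4_eq_abs: "sqrt (sqrt (y ^ 4)) = \<bar>y\<bar>"
proof -
  have "y ^ 4 = (y ^ 2) ^ 2"
    by (simp flip: power_mult)
  then have "sqrt (y ^ 4) = y ^ 2"
    by (simp only: real_sqrt_abs) simp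
  then show ?thesis
    by (simp add: real_sqrt_abs)
qed

context prob_space
begin

lemma indep_var_sum_insert:
  fixes Z :: "'i \<Rightarrow> 'a \<Rightarrow> real"
  assumes "indep_vars (\<lambda>_. borel) Z (insert i I)" "i \<notin> I"
  shows "indep_var borel (\<lambda>\<omega>. \<Sum>j\<in>I. Z j \<omega>) borel (Z i)"
proof -
  have "indep_var (PiM I (\<lambda>_. borel)) (\<lambda>\<omega>. restrict (\<lambda>j. Z j \<omega>) I)
                  (PiM {i} (\<lambda>_. borel)) (\<lambda>\<omega>. restrict (\<lambda>j. Z j \<omega>) {i})"
    using assms by (intro indep_var_restrict) auto
  then have "indep_var borel ((\<lambda>f. \<Sum>j\<in>I. f j) \<circ> (\<lambda>\<omega>. restrict (\<lambda>j. Z j \<omega>) I))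
                       borel ((\<lambda>f. f i) \<circ> (\<lambda>\<omega>. restrict (\<lambda>j. Z j \<omega>) {i}))"
    by (rule indep_var_compose) measurable
  then show ?thesis
    by (simp add: o_def cong: sum.cong)
qed

lemma moments_add_indep:
  fixes X Y :: "'a \<Rightarrow> real"
  assumes indep: "indep_var borel X borel Y"
    and bounded: "\<And>\<omega>. \<omega> \<in> space M \<Longrightarrow> \<bar>X \<omega>\<bar> \<le> a" "\<And>\<omega>. \<omega> \<in> space M \<Longrightarrow> \<bar>Y \<omega>\<bar> \<le> b"
    and centered: "expectation X = 0" "expectation Y = 0"
  shows "expectation (\<lambda>\<omega>. (X \<omega> + Y \<omega>)^2) = expectation (\<lambda>\<omega>. X \<omega>^2) + expectation (\<lambda>\<omega>. Y \<omega>^2)"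
    and "expectation (\<lambda>\<omega>. (X \<omega> + Y \<omega>)^4) = expectation (\<lambda>\<omega>. X \<omega>^4)
           + 6 * expectation (\<lambda>\<omega>. X \<omega>^2) * expectation (\<lambda>\<omega>. Y \<omega>^2) + expectation (\<lambda>\<omega>. Y \<omega>^4)"
proof -
  have meas: "X \<in> borel_measurable M" "Y \<in> borel_measurable M"
    using indep_var_rv1[OF indep] indep_var_rv2[OF indep] by auto
  have int_X: "integrable M (\<lambda>\<omega>. X \<omega>^m)" for m
    using bounded meas
    by (intro integrable_const_bound[where B="a^m"]) (auto simp: power_abs intro!: power_mono)
  have int_Y: "integrable M (\<lambda>\<omega>. Y \<omega>^n)" for n
    using bounded meas
    by (intro integrable_const_bound[where B="b^n"]) (auto simp: power_abs intro!: power_mono)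
  define P where "P m n = (\<lambda>\<omega>. X \<omega>^m * Y \<omega>^n)" for m n
  have int_P: "integrable M (P m n)" for m n
  proof (unfold P_def, rule integrable_const_bound[where B="a^m * b^n"])
    have "\<bar>X \<omega>\<bar>^m * \<bar>Y \<omega>\<bar>^n \<le> a^m * b^n" if "\<omega> \<in> space M" for \<omega>
      using bounded[OF that] by (intro mult_mono power_mono) (auto intro: order.trans[OF abs_ge_zero])
    then show "AE \<omega> in M. norm (X \<omega>^m * Y \<omega>^n) \<le> a^m * b^n"
      by (simp add: abs_mult power_abs)
  qed (use meas in measurable)
  have E_P: "expectation (P m n) = expectation (\<lambda>\<omega>. X \<omega>^m) * expectation (\<lambda>\<omega>. Y \<omega>^n)" for m n
  proof -
    have "indep_var borel ((\<lambda>z. z^m) \<circ> X) borel ((\<lambda>z. z^n) \<circ> Y)"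
      using indep by (rule indep_var_compose) auto
    from indep_var_lebesgue_integral[OF this] show ?thesis
      using int_X int_Y by (simp add: P_def o_def)
  qed
  have "(\<lambda>\<omega>. (X \<omega> + Y \<omega>)^2) = (\<lambda>\<omega>. P 2 0 \<omega> + 2 * P 1 1 \<omega> + P 0 2 \<omega>)"
    unfolding P_def by (rule ext) algebra
  then show "expectation (\<lambda>\<omega>. (X \<omega> + Y \<omega>)^2) = expectation (\<lambda>\<omega>. X \<omega>^2) + expectation (\<lambda>\<omega>. Y \<omega>^2)"
    using int_P by (simp add: E_P centered prob_space)
  have "(\<lambda>\<omega>. (X \<omega> + Y \<omega>)^4)
      = (\<lambda>\<omega>. P 4 0 \<omega> + 4 * P 3 1 \<omega> + 6 * P 2 2 \<omega> + 4 * P 1 3 \<omega> + P 0 4 \<omega>)"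
    unfolding P_def by (rule ext) algebra
  then show "expectation (\<lambda>\<omega>. (X \<omega> + Y \<omega>)^4) = expectation (\<lambda>\<omega>. X \<omega>^4)
      + 6 * expectation (\<lambda>\<omega>. X \<omega>^2) * expectation (\<lambda>\<omega>. Y \<omega>^2) + expectation (\<lambda>\<omega>. Y \<omega>^4)"
    using int_P by (simp add: E_P centered prob_space)
qed

lemma expectation_power4_le_power2:
  fixes X :: "'a \<Rightarrow> real"
  assumes "X \<in> borel_measurable M" "\<And>\<omega>. \<omega> \<in> space M \<Longrightarrow> \<bar>X \<omega>\<bar> \<le> 1"
  shows "expectation (\<lambda>\<omega>. X \<omega>^4) \<le> expectation (\<lambda>\<omega>. X \<omega>^2)"
proof (rule integral_mono)
  have int_power: "integrable M (\<lambda>\<omega>. X \<omega>^k)" for k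
    using assms by (intro integrable_const_bound[where B=1]) (auto simp: power_abs power_le_one)
  show "integrable M (\<lambda>\<omega>. X \<omega>^4)" "integrable M (\<lambda>\<omega>. X \<omega>^2)"
    by (rule int_power)+
  show "X \<omega>^4 \<le> X \<omega>^2" if "\<omega> \<in> space M" for \<omega>
  proof -
    have "X \<omega>^2 \<le> 1"
      using assms(2)[OF that] by (simp add: abs_square_le_1)
    then have "X \<omega>^2 * X \<omega>^2 \<le> X \<omega>^2"
      by (intro mult_right_le_one_le) auto
    then show ?thesis
      by (simp flip: power_add)
  qed
qed

lemma centered_indicator_moments:
  assumes "A \<in> events"
  shows "expectation (\<lambda>y. indicator A y - prob A) = 0"
    and "expectation (\<lambda>y. (indicator A y - prob A)^2) = prob A * (1 - prob A)"
proof -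
  have int: "integrable M (indicator A :: 'a \<Rightarrow> real)"
    using assms by (intro integrable_real_indicator) (auto simp: less_top[symmetric])
  then show "expectation (\<lambda>y. indicator A y - prob A) = 0"
    using assms by (simp add: prob_space)
  have "(indicator A y - prob A)^2 = (1 - 2 * prob A) * indicator A y + (prob A)^2" for y :: 'a
    by (simp add: indicator_def power2_eq_square algebra_simps)
  then have "expectation (\<lambda>y. (indicator A y - prob A)^2)
      = expectation (\<lambda>y. (1 - 2 * prob A) * indicator A y + (prob A)^2)"
    by (simp only:)
  also have "\<dots> = (1 - 2 * prob A) * prob A + (prob A)^2"
    using int assms by (simp add: prob_space)
  finally show "expectation (\<lambda>y. (indicator A y - prob A)^2) = prob A * (1 - prob A)"
    by (simp add: algebra_simps power2_eq_square)
qed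

lemma moments_sum_indep:
  fixes Z :: "'i \<Rightarrow> 'a \<Rightarrow> real"
  assumes "finite I" "indep_vars (\<lambda>_. borel) Z I"
    and "\<And>i \<omega>. i \<in> I \<Longrightarrow> \<omega> \<in> space M \<Longrightarrow> \<bar>Z i \<omega>\<bar> \<le> 1"
    and "\<And>i. i \<in> I \<Longrightarrow> expectation (Z i) = 0"
  shows "expectation (\<lambda>\<omega>. (\<Sum>i\<in>I. Z i \<omega>)^2) = (\<Sum>i\<in>I. expectation (\<lambda>\<omega>. Z i \<omega>^2)) \<and>
    expectation (\<lambda>\<omega>. (\<Sum>i\<in>I. Z i \<omega>)^4)
      \<le> (\<Sum>i\<in>I. expectation (\<lambda>\<omega>. Z i \<omega>^2)) + 3 * (\<Sum>i\<in>I. expectation (\<lambda>\<omega>. Z i \<omega>^2))^2"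
  using assms
proof (induction I rule: finite_induct)
  case empty
  then show ?case by simp
next
  case (insert i I)
  let ?S = "\<lambda>\<omega>. \<Sum>j\<in>I. Z j \<omega>"
  define V where "V = (\<Sum>j\<in>I. expectation (\<lambda>\<omega>. Z j \<omega>^2))"
  define q where "q = expectation (\<lambda>\<omega>. Z i \<omega>^2)"
  have indep_I: "indep_vars (\<lambda>_. borel) Z I"
    using insert.prems(1) by (rule indep_vars_subset) auto
  have IH: "expectation (\<lambda>\<omega>. ?S \<omega>^2) = V" "expectation (\<lambda>\<omega>. ?S \<omega>^4) \<le> V + 3 * V^2"
    using insert.IH[OF indep_I] insert.prems(2,3) by (auto simp: V_def)
  have meas: "Z j \<in> borel_measurable M" if "j \<in> insert i I" for j
    using insert.prems(1) that unfolding indep_vars_def by auto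
  have S_bounded: "\<bar>?S \<omega>\<bar> \<le> real (card I)" if "\<omega> \<in> space M" for \<omega>
    using insert.prems(2) that by (intro abs_sum_le_card) auto
  have Z_bounded: "\<bar>Z i \<omega>\<bar> \<le> 1" if "\<omega> \<in> space M" for \<omega>
    using insert.prems(2) that by simp
  have "expectation ?S = 0"
    using meas insert.prems(2,3)
    by (subst Bochner_Integration.integral_sum) (auto intro!: integrable_const_bound[where B=1])
  note moments = moments_add_indep[OF indep_var_sum_insert[OF insert.prems(1) insert.hyps(2)]
      S_bounded Z_bounded this insert.prems(3)]
  have "expectation (\<lambda>\<omega>. Z i \<omega>^4) \<le> q"
    unfolding q_def using meas Z_bounded by (intro expectation_power4_le_power2) auto
  have "0 \<le> q"
    unfolding q_def by simp
  have "expectation (\<lambda>\<omega>. (?S \<omega> + Z i \<omega>)^4)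
      = expectation (\<lambda>\<omega>. ?S \<omega>^4) + 6 * V * q + expectation (\<lambda>\<omega>. Z i \<omega>^4)"
    using moments(2) IH(1) by (simp add: q_def)
  also have "\<dots> \<le> (V + 3 * V^2) + 6 * V * q + q"
    using IH(2) \<open>expectation (\<lambda>\<omega>. Z i \<omega>^4) \<le> q\<close> by linarith
  also have "\<dots> \<le> (V + q) + 3 * (V + q)^2"
    using \<open>0 \<le> q\<close> by (simp add: power2_sum)
  finally show ?case
    using moments(1) IH(1) insert.hyps by (simp add: V_def q_def add.commute)
qed

lemma expectation_sqrt_sqrt_le:
  fixes f :: "'a \<Rightarrow> real"
  assumes "f \<in> borel_measurable M" "\<And>\<omega>. \<omega> \<in> space M \<Longrightarrow> 0 \<le> f \<omega> \<and> f \<omega> \<le> K"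
    and "expectation f \<le> B" "0 < B"
  shows "expectation (\<lambda>\<omega>. sqrt (sqrt (f \<omega>))) \<le> sqrt (sqrt B)"
proof -
  define a where "a = sqrt (sqrt B)"
  have "0 < a" "a^4 = B"
    using \<open>0 < B\<close> by (simp_all add: a_def sqrt_sqrt_power4)
  have int_f: "integrable M f"
    using assms(1,2) by (intro integrable_const_bound[where B=K]) auto
  have int_root: "integrable M (\<lambda>\<omega>. sqrt (sqrt (f \<omega>)))"
    using assms(1,2) by (intro integrable_const_bound[where B="sqrt (sqrt K)"]) auto
  \<comment> \<open>\<open>z^(1/4) \<le> 3a/4 + z/(4a^3)\<close> is the tangent line of the concave \<open>z \<mapsto> z^(1/4)\<close> at \<open>z = a^4\<close>.\<close>
  have young: "sqrt (sqrt (f \<omega>)) \<le> 3*a/4 + f \<omega> / (4*a^3)" if "\<omega> \<in> space M" for \<omega>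
  proof -
    define y where "y = sqrt (sqrt (f \<omega>))"
    have "0 \<le> y" "y^4 = f \<omega>"
      using assms(2)[OF that] by (simp_all add: y_def sqrt_sqrt_power4)
    have "0 \<le> (y - a)^2 * (y^2 + 2*a*y + 3*a^2)"
      using \<open>0 \<le> y\<close> \<open>0 < a\<close> by (intro mult_nonneg_nonneg) auto
    then have "4*a^3*y \<le> 3*a^4 + y^4"
      by (simp add: power2_eq_square power3_eq_cube power4_eq_xxxx algebra_simps)
    then show ?thesis
      using \<open>0 < a\<close> \<open>y^4 = f \<omega>\<close> by (simp add: y_def[symmetric] field_simps power4_eq_xxxx power3_eq_cube)
  qed
  have "expectation (\<lambda>\<omega>. sqrt (sqrt (f \<omega>))) \<le> expectation (\<lambda>\<omega>. 3*a/4 + f \<omega> / (4*a^3))"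
    using int_root int_f young by (intro integral_mono) auto
  also have "\<dots> = 3*a/4 + expectation f / (4*a^3)"
    using int_f by (simp add: prob_space)
  also have "\<dots> \<le> 3*a/4 + B / (4*a^3)"
    using assms(3) \<open>0 < a\<close> by (simp add: divide_right_mono)
  also have "\<dots> = a"
    using \<open>0 < a\<close> \<open>a^4 = B\<close> by (simp add: field_simps power4_eq_xxxx power3_eq_cube)
  finally show ?thesis unfolding a_def .
qed

end

lemma indep_vars_PiM_coordinates:
  assumes "\<And>i. i \<in> I \<Longrightarrow> prob_space (M i)"
  shows "prob_space.indep_vars (PiM I M) M (\<lambda>i \<omega>. \<omega> i) I"
proof -
  interpret prob_space "PiM I M"
    using assms by (rule prob_space_PiM)
  show ?thesis
  proof (cases "I = {}")
    case True
    then show ?thesis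
      unfolding indep_vars_def indep_sets_def by auto
  next
    case False
    have "distr (PiM I M) (PiM I M) (\<lambda>\<omega>. \<lambda>i\<in>I. \<omega> i) = distr (PiM I M) (PiM I M) (\<lambda>\<omega>. \<omega>)"
      by (rule distr_cong) (auto simp: space_PiM)
    also have "\<dots> = PiM I (\<lambda>i. distr (PiM I M) (M i) (\<lambda>\<omega>. \<omega> i))"
      using assms by (auto simp: distr_PiM_component intro: PiM_cong)
    finally show ?thesis
      using False by (subst indep_vars_iff_distr_eq_PiM') auto
  qed
qed

lemma integral_PiM_coordinate:
  fixes f :: "'b \<Rightarrow> real"
  assumes "\<And>i. i \<in> I \<Longrightarrow> prob_space (M i)" "i \<in> I" "f \<in> borel_measurable (M i)"
  shows "(\<integral>\<omega>. f (\<omega> i) \<partial>PiM I M) = (\<integral>y. f y \<partial>M i)"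
proof -
  have "(\<integral>y. f y \<partial>M i) = (\<integral>y. f y \<partial>distr (PiM I M) (M i) (\<lambda>\<omega>. \<omega> i))"
    using assms(1,2) by (simp add: distr_PiM_component)
  also have "\<dots> = (\<integral>\<omega>. f (\<omega> i) \<partial>PiM I M)"
    using assms(2,3) by (intro integral_distr) auto
  finally show ?thesis ..
qed

lemma fourth_moment_weighted_indicators:
  fixes M :: "'i \<Rightarrow> 'b measure" and w :: "'i \<Rightarrow> real"
  assumes "finite I" "I \<subseteq> J" "\<And>j. j \<in> J \<Longrightarrow> prob_space (M j)"
    and A: "\<And>t. t \<in> I \<Longrightarrow> A t \<in> sets (M t)" and w: "\<And>t. t \<in> I \<Longrightarrow> 0 \<le> w t \<and> w t \<le> 1"
  defines "V \<equiv> \<Sum>t\<in>I. w t * measure (M t) (A t)"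
  shows "(\<integral>\<omega>. (\<Sum>t\<in>I. w t * (indicator (A t) (\<omega> t) - measure (M t) (A t)))^4 \<partial>PiM J M)
           \<le> V + 3 * V^2"
proof -
  interpret prob_space "PiM J M"
    using assms(3) by (rule prob_space_PiM)
  define m where "m t = measure (M t) (A t)" for t
  define Z where "Z t \<omega> = w t * (indicator (A t) (\<omega> t) - m t)" for t \<omega>
  have m: "0 \<le> m t \<and> m t \<le> 1" if "t \<in> I" for t
    using assms(2,3) that unfolding m_def by (auto intro: prob_space.prob_le_1)
  have "indep_vars M (\<lambda>t \<omega>. \<omega> t) I"
    using indep_vars_PiM_coordinates[OF assms(3)] assms(2) by (rule indep_vars_subset)
  then have indep: "indep_vars (\<lambda>_. borel) Z I"
    unfolding Z_def by (rule indep_vars_compose2[where X="\<lambda>t \<omega>. \<omega> t"]) (use A in measurable)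
  have bounded: "\<bar>Z t \<omega>\<bar> \<le> 1" if "t \<in> I" for t \<omega>
  proof -
    have "\<bar>indicator (A t) (\<omega> t) - m t\<bar> \<le> 1"
      using m[OF that] by (auto simp: indicator_def)
    then show ?thesis
      using w[OF that] by (simp add: Z_def abs_mult mult_le_one)
  qed
  have centered: "expectation (Z t) = 0" and variance: "expectation (\<lambda>\<omega>. Z t \<omega>^2) \<le> w t * m t"
    if "t \<in> I" for t
  proof -
    interpret Mt: prob_space "M t"
      using assms(2,3) that by auto
    have coordinate: "expectation (\<lambda>\<omega>. f (\<omega> t)) = (\<integral>y. f y \<partial>M t)"
      if "f \<in> borel_measurable (M t)" for f :: "'b \<Rightarrow> real"
      using assms(2,3) \<open>t \<in> I\<close> that by (intro integral_PiM_coordinate) auto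
    note moments = Mt.centered_indicator_moments[OF A[OF that]]
    show "expectation (Z t) = 0"
      unfolding Z_def using A[OF that] moments(1) by (subst coordinate) (auto simp: m_def)
    have "expectation (\<lambda>\<omega>. Z t \<omega>^2) = (w t)^2 * (m t * (1 - m t))"
      unfolding Z_def power_mult_distrib using A[OF that] moments(2) by (subst coordinate) (auto simp: m_def)
    also have "\<dots> \<le> w t * m t"
    proof -
      have "w t * (m t * (1 - m t)) \<le> m t * (1 - m t)" "m t * (1 - m t) \<le> m t"
        using w[OF that] m[OF that] by (auto intro: mult_left_le_one_le mult_left_le)
      then show ?thesis
        using w[OF that] by (simp add: power2_eq_square mult.assoc mult_left_mono)
    qed
    finally show "expectation (\<lambda>\<omega>. Z t \<omega>^2) \<le> w t * m t" .
  qed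
  define V' where "V' = (\<Sum>t\<in>I. expectation (\<lambda>\<omega>. Z t \<omega>^2))"
  have "0 \<le> V'" "V' \<le> V"
    unfolding V'_def V_def m_def[symmetric] using variance by (auto intro: sum_nonneg sum_mono)
  moreover have "expectation (\<lambda>\<omega>. (\<Sum>t\<in>I. Z t \<omega>)^4) \<le> V' + 3 * V'^2"
    unfolding V'_def using moments_sum_indep[OF assms(1) indep] bounded centered by blast
  moreover have "V'^2 \<le> V^2"
    using \<open>V' \<le> V\<close> \<open>0 \<le> V'\<close> by (rule power_mono)
  ultimately show ?thesis
    unfolding Z_def m_def by linarith
qed

section \<open>Chaining along a dyadic grid\<close>

lemma dyadic_chaining:
  fixes h :: "real \<Rightarrow> real"
  assumes "j < 2^K"
  shows "\<bar>h (real j / 2^K)\<bar> \<le> \<bar>h 0\<bar>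
    + (\<Sum>k\<in>{1..K}. sqrt (sqrt (\<Sum>i\<in>{1..<2^k}. (h (real i / 2^k) - h (real (i - 1) / 2^k))^4)))"
  using assms
proof (induction K arbitrary: j)
  case 0
  then show ?case by simp
next
  case (Suc K)
  define D where "D = (\<Sum>i\<in>{1..<2^Suc K}. (h (real i / 2^Suc K) - h (real (i - 1) / 2^Suc K))^4)"
  have "0 \<le> D"
    unfolding D_def by (intro sum_nonneg) simp
  have parent: "real (j div 2) / 2^K = real (2 * (j div 2)) / 2^Suc K"
    by simp
  have IH: "\<bar>h (real (j div 2) / 2^K)\<bar> \<le> \<bar>h 0\<bar> + (\<Sum>k\<in>{1..K}. sqrt (sqrt
      (\<Sum>i\<in>{1..<2^k}. (h (real i / 2^k) - h (real (i - 1) / 2^k))^4)))"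
    using Suc by (intro Suc.IH) auto
  have "\<bar>h (real j / 2^Suc K) - h (real (j div 2) / 2^K)\<bar> \<le> sqrt (sqrt D)"
  proof (cases "even j")
    case True
    then show ?thesis
      using \<open>0 \<le> D\<close> by (simp add: parent)
  next
    case False
    then have "j - 1 = 2 * (j div 2)" "j \<in> {1..<2^Suc K}"
      using Suc.prems by (auto elim: oddE)
    then have "(h (real j / 2^Suc K) - h (real (j - 1) / 2^Suc K))^4 \<le> D"
      unfolding D_def by (intro member_le_sum) auto
    then have "(h (real j / 2^Suc K) - h (real (j div 2) / 2^K))^4 \<le> D"
      unfolding parent \<open>j - 1 = 2 * (j div 2)\<close> .
    then have "sqrt (sqrt ((h (real j / 2^Suc K) - h (real (j div 2) / 2^K))^4)) \<le> sqrt (sqrt D)"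
      by (intro real_sqrt_le_mono)
    then show ?thesis
      by (simp only: sqrt_sqrt_power4_eq_abs)
  qed
  then show ?case
    using IH by (simp add: D_def)
qed

lemma partition_cell_right:
  fixes u :: "nat \<Rightarrow> 'a::linorder"
  assumes "u 0 \<le> v" "v < u N"
  shows "\<exists>j<N. u j \<le> v \<and> v < u (Suc j)"
  using assms(2)
proof (induction N)
  case 0
  then show ?case using assms(1) by simp
next
  case (Suc N)
  show ?case
  proof (cases "u N \<le> v")
    case True
    then show ?thesis using Suc.prems by blast
  next
    case False
    then show ?thesis using Suc.IH less_SucI by (meson not_le)
  qed
qed

lemma partition_cell_left:
  fixes u :: "nat \<Rightarrow> 'a::linorder"
  assumes "u 0 < v" "v \<le> u N"
  shows "\<exists>j<N. u j < v \<and> v \<le> u (Suc j)"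
  using assms(2)
proof (induction N)
  case 0
  then show ?case using assms(1) by simp
next
  case (Suc N)
  show ?case
  proof (cases "u N < v")
    case True
    then show ?thesis using Suc.prems by blast
  next
    case False
    then show ?thesis using Suc.IH less_SucI by (meson not_less)
  qed
qed

lemma sum_sqrt_sqrt_divide_power2_le:
  assumes "0 \<le> c"
  shows "(\<Sum>k\<in>{1..K}. sqrt (sqrt (c / 2^k))) \<le> 6 * sqrt (sqrt c)"
proof -
  define r where "r = 1 / sqrt (sqrt (2::real))"
  have "0 < r" unfolding r_def by simp
  have "7/6 \<le> sqrt (sqrt (2::real))"
  proof -
    have "sqrt (sqrt ((7/6)^4)) \<le> sqrt (sqrt (2::real))"
      by (simp add: power_divide)
    then show ?thesis
      by (simp only: sqrt_sqrt_power4_eq_abs)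
  qed
  then have "r \<le> 6/7"
    unfolding r_def by (simp add: divide_simps)
  have summand: "sqrt (sqrt (c / 2^k)) = sqrt (sqrt c) * r^k" for k
    by (simp add: r_def real_sqrt_divide real_sqrt_power power_one_over)
  have "(\<Sum>k\<in>{1..K}. r^k) = (r - r^Suc K) / (1 - r)"
    using \<open>r \<le> 6/7\<close> by (simp add: sum_gp)
  also have "\<dots> \<le> r / (1 - r)"
    using \<open>0 < r\<close> \<open>r \<le> 6/7\<close> by (intro divide_right_mono) auto
  also have "\<dots> \<le> 6"
    using \<open>0 < r\<close> \<open>r \<le> 6/7\<close> by (simp add: divide_simps)
  finally show ?thesis
    unfolding summand sum_distrib_left[symmetric] using assms by (simp add: mult.commute mult_left_mono)
qed

section \<open>Uniform deviation of a weighted empirical distribution function\<close>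

locale weighted_empirical_process =
  fixes J :: "'i set" and M :: "'i \<Rightarrow> real measure" and I :: "'i set"
    and g :: "'i \<Rightarrow> real \<Rightarrow> real" and w :: "'i \<Rightarrow> real"
  assumes prob_space_M: "\<And>j. j \<in> J \<Longrightarrow> prob_space (M j)"
    and sets_M: "\<And>j. j \<in> J \<Longrightarrow> sets (M j) = sets borel"
    and finite_I: "finite I" and I_subset: "I \<subseteq> J"
    and weight_bounds: "\<And>t. t \<in> I \<Longrightarrow> 0 \<le> w t \<and> w t \<le> 1"
    and mono_g: "\<And>t. t \<in> I \<Longrightarrow> mono (g t)"
    and isCont_g: "\<And>t u. t \<in> I \<Longrightarrow> isCont (g t) u"
    and measure_atMost: "\<And>t u. t \<in> I \<Longrightarrow> 0 \<le> u \<Longrightarrow> u < 1 \<Longrightarrow> measure (M t) {..u} = g t u"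
    and measure_lessThan: "\<And>t u. t \<in> I \<Longrightarrow> 0 < u \<Longrightarrow> u \<le> 1 \<Longrightarrow> measure (M t) {..<u} = g t u"
begin

definition dev :: "('i \<Rightarrow> real) \<Rightarrow> real set \<Rightarrow> real" where
  "dev p A = (\<Sum>t\<in>I. w t * (indicator A (p t) - measure (M t) A))"

lemma dev_mono:
  assumes "A \<subseteq> B"
  shows "dev p A \<le> dev p B + (\<Sum>t\<in>I. w t * (measure (M t) B - measure (M t) A))"
proof -
  have "w t * indicator A (p t) \<le> w t * indicator B (p t)" if "t \<in> I" for t
    using assms weight_bounds[OF that] by (intro mult_left_mono) (auto simp: indicator_def)
  then show ?thesis
    unfolding dev_def sum.distrib[symmetric] by (intro sum_mono) (simp add: algebra_simps)
qed

lemma measure_atMost_split: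
  assumes "t \<in> I" "a \<le> b"
  shows "measure (M t) {..b} = measure (M t) {..a} + measure (M t) {a<..b}"
proof -
  interpret prob_space "M t"
    using I_subset assms(1) by (auto intro: prob_space_M)
  have "{..b} = {..a} \<union> {a<..b}"
    using assms(2) by auto
  moreover have "sets (M t) = sets borel"
    using I_subset assms(1) sets_M by blast
  moreover have "prob ({..a} \<union> {a<..b}) = prob {..a} + prob {a<..b}"
    using \<open>sets (M t) = sets borel\<close> by (intro finite_measure_Union) auto
  ultimately show ?thesis
    by simp
qed

lemma dev_atMost_split:
  assumes "a \<le> b"
  shows "dev p {..b} = dev p {..a} + dev p {a<..b}"
proof -
  have "measure (M t) {..b} = measure (M t) {..a} + measure (M t) {a<..b}" if "t \<in> I" for t
    using that assms by (rule measure_atMost_split)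
  moreover have "indicator {..b} y = indicator {..a} y + (indicator {a<..b} y :: real)" for y
    using assms by (auto simp: indicator_def)
  ultimately show ?thesis
    unfolding dev_def sum.distrib[symmetric] by (intro sum.cong) (auto simp: algebra_simps)
qed

lemma abs_dev_le: "\<bar>dev p A\<bar> \<le> real (card I)"
proof -
  have "\<bar>w t * (indicator A (p t) - measure (M t) A)\<bar> \<le> 1" if "t \<in> I" for t
  proof -
    have "0 \<le> measure (M t) A" "measure (M t) A \<le> 1"
      using I_subset that by (auto intro: prob_space.prob_le_1 prob_space_M)
    then have "\<bar>indicator A (p t) - measure (M t) A\<bar> \<le> 1"
      by (auto simp: indicator_def)
    then show ?thesis
      using weight_bounds[OF that] by (simp add: abs_mult mult_le_one)
  qed
  then show ?thesis
    unfolding dev_def by (rule abs_sum_le_card)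
qed

text \<open>The chaining grid is equally spaced for \<open>gauge\<close>; the summand \<open>u\<close> keeps \<open>gauge\<close> strictly
  increasing even when all weights vanish.\<close>

definition gauge :: "real \<Rightarrow> real" where
  "gauge u = u + (\<Sum>t\<in>I. w t * g t u)"

lemma strict_mono_gauge: "strict_mono gauge"
proof (rule strict_monoI)
  fix u u' :: real assume "u < u'"
  have "(\<Sum>t\<in>I. w t * g t u) \<le> (\<Sum>t\<in>I. w t * g t u')"
    using weight_bounds monoD[OF mono_g \<open>u < u'\<close>[THEN less_imp_le]] by (intro sum_mono mult_left_mono) auto
  then show "gauge u < gauge u'"
    unfolding gauge_def using \<open>u < u'\<close> by linarith
qed

lemmas gauge_less_iff = strict_mono_less[OF strict_mono_gauge]
lemmas gauge_le_iff = strict_mono_less_eq[OF strict_mono_gauge]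
lemmas gauge_eq_iff = strict_mono_eq[OF strict_mono_gauge]

lemma continuous_on_gauge: "continuous_on A gauge"
  unfolding gauge_def using isCont_g by (intro continuous_intros continuous_at_imp_continuous_on) auto

lemma weighted_increment_le_gauge:
  "u \<le> u' \<Longrightarrow> (\<Sum>t\<in>I. w t * (g t u' - g t u)) \<le> gauge u' - gauge u"
  unfolding gauge_def by (simp add: sum_subtractf right_diff_distrib)

lemma gauge_1_minus_gauge_0: "0 < gauge 1 - gauge 0" "gauge 1 - gauge 0 \<le> real (card I + 1)"
proof -
  show "0 < gauge 1 - gauge 0"
    using gauge_less_iff[of 0 1] by simp
  have "g t 1 - g t 0 \<le> 1" if "t \<in> I" for t
  proof -
    interpret prob_space "M t"
      using I_subset that by (auto intro: prob_space_M)
    have "prob {..<1} \<le> 1" "0 \<le> prob {..0}"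
      by auto
    then show ?thesis
      using measure_atMost[OF that, of 0] measure_lessThan[OF that, of 1] by simp
  qed
  then have "(\<Sum>t\<in>I. w t * (g t 1 - g t 0)) \<le> (\<Sum>t\<in>I. 1)"
    using weight_bounds by (intro sum_mono mult_le_one) (auto simp: monoD mono_g)
  then show "gauge 1 - gauge 0 \<le> real (card I + 1)"
    unfolding gauge_def by (simp add: sum_subtractf right_diff_distrib)
qed

lemma dev_le_dev_plus_gauge:
  assumes "A \<subseteq> B" "u \<le> u'"
    and "\<And>t. t \<in> I \<Longrightarrow> measure (M t) A = g t u" "\<And>t. t \<in> I \<Longrightarrow> measure (M t) B = g t u'"
  shows "dev p A \<le> dev p B + (gauge u' - gauge u)"
  using dev_mono[OF assms(1), of p] weighted_increment_le_gauge[OF assms(2)] assms(3,4) by simp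

lemma
  shows dev_atMost_le_atMost:
      "0 \<le> u \<Longrightarrow> u \<le> u' \<Longrightarrow> u' < 1 \<Longrightarrow> dev p {..u} \<le> dev p {..u'} + (gauge u' - gauge u)"
    and dev_atMost_le_lessThan:
      "0 \<le> u \<Longrightarrow> u < u' \<Longrightarrow> u' \<le> 1 \<Longrightarrow> dev p {..u} \<le> dev p {..<u'} + (gauge u' - gauge u)"
    and dev_lessThan_le_atMost:
      "0 < u \<Longrightarrow> u \<le> u' \<Longrightarrow> u' < 1 \<Longrightarrow> dev p {..<u} \<le> dev p {..u'} + (gauge u' - gauge u)"
    and dev_lessThan_le_lessThan:
      "0 < u \<Longrightarrow> u \<le> u' \<Longrightarrow> u' \<le> 1 \<Longrightarrow> dev p {..<u} \<le> dev p {..<u'} + (gauge u' - gauge u)"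
  by (auto intro!: dev_le_dev_plus_gauge simp: measure_atMost measure_lessThan)

definition quantile :: "real \<Rightarrow> real" where
  "quantile s = (SOME u. 0 \<le> u \<and> u \<le> 1 \<and> gauge u = gauge 0 + s * (gauge 1 - gauge 0))"

lemma quantile_spec:
  assumes "0 \<le> s" "s \<le> 1"
  shows "0 \<le> quantile s \<and> quantile s \<le> 1 \<and> gauge (quantile s) = gauge 0 + s * (gauge 1 - gauge 0)"
proof -
  have "gauge 0 + s * (gauge 1 - gauge 0) \<le> gauge 0 + 1 * (gauge 1 - gauge 0)"
    using assms gauge_1_minus_gauge_0(1) by (intro add_left_mono mult_right_mono) auto
  then have "\<exists>u. 0 \<le> u \<and> u \<le> 1 \<and> gauge u = gauge 0 + s * (gauge 1 - gauge 0)"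
    using assms gauge_1_minus_gauge_0(1) by (intro IVT' continuous_on_gauge) auto
  then show ?thesis
    unfolding quantile_def by (rule someI_ex)
qed

definition grid :: "nat \<Rightarrow> nat \<Rightarrow> real" where
  "grid k i = quantile (real i / 2^k)"

lemma grid_spec:
  assumes "i \<le> 2^k"
  shows "0 \<le> grid k i \<and> grid k i \<le> 1
    \<and> gauge (grid k i) = gauge 0 + real i / 2^k * (gauge 1 - gauge 0)"
proof -
  have "real i \<le> real (2^k)"
    using assms by (simp only: of_nat_le_iff)
  then show ?thesis
    unfolding grid_def by (intro quantile_spec) auto
qed

lemma grid_less_iff:
  assumes "i \<le> 2^k" "i' \<le> 2^k"
  shows "grid k i < grid k i' \<longleftrightarrow> i < i'"
proof -
  have "grid k i < grid k i' \<longleftrightarrow> gauge (grid k i) < gauge (grid k i')"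
    by (rule gauge_less_iff[symmetric])
  also have "\<dots> \<longleftrightarrow> real i * (gauge 1 - gauge 0) < real i' * (gauge 1 - gauge 0)"
    using grid_spec[OF assms(1)] grid_spec[OF assms(2)] by (simp add: divide_less_cancel)
  finally show ?thesis
    using gauge_1_minus_gauge_0(1) by simp
qed

lemma grid_0 [simp]: "grid k 0 = 0"
proof -
  have "gauge (grid k 0) = gauge 0"
    using grid_spec[of 0 k] by simp
  then show ?thesis
    by (simp add: gauge_eq_iff)
qed

lemma grid_top [simp]: "grid k (2^k) = 1"
proof -
  have "gauge (grid k (2^k)) = gauge 1"
    using grid_spec[of "2^k" k] by simp
  then show ?thesis
    by (simp add: gauge_eq_iff)
qed

lemma grid_less_1: "i < 2^k \<Longrightarrow> grid k i < 1"
  using grid_less_iff[of i k "2^k"] by simp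

lemma gauge_grid_Suc:
  "i < 2^k \<Longrightarrow> gauge (grid k (Suc i)) - gauge (grid k i) = (gauge 1 - gauge 0) / 2^k"
  using grid_spec[of i k] grid_spec[of "Suc i" k] by (simp add: field_simps)

definition depth :: nat where
  "depth = floor_log (card I + 1)"

lemma cell_width_le_2: "(gauge 1 - gauge 0) / 2^depth \<le> 2"
proof -
  have "card I + 1 < 2 * 2^depth"
    unfolding depth_def by (rule floor_log_exp2_gt)
  then have "card I + 1 \<le> 2 * 2^depth"
    by simp
  then have "real (card I + 1) \<le> real (2 * 2^depth)"
    by (simp only: of_nat_le_iff)
  then show ?thesis
    using gauge_1_minus_gauge_0(2) by (simp add: field_simps)
qed

definition increments :: "('i \<Rightarrow> real) \<Rightarrow> nat \<Rightarrow> real" where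
  "increments p k = (\<Sum>i\<in>{1..<2^k}. (dev p {..grid k i} - dev p {..grid k (i - 1)})^4)"

definition grid_bound :: "('i \<Rightarrow> real) \<Rightarrow> real" where
  "grid_bound p = \<bar>dev p {..0}\<bar> + (\<Sum>k\<in>{1..depth}. sqrt (sqrt (increments p k))) + \<bar>dev p {..1}\<bar>"

lemma increments_nonneg: "0 \<le> increments p k"
  unfolding increments_def by (intro sum_nonneg) simp

lemma grid_bound_nonneg: "0 \<le> grid_bound p"
  unfolding grid_bound_def by (intro add_nonneg_nonneg sum_nonneg) (auto simp: increments_nonneg)

lemma abs_dev_grid_le:
  assumes "j \<le> 2^depth"
  shows "\<bar>dev p {..grid depth j}\<bar> \<le> grid_bound p"
proof (cases "j = 2^depth")
  case True
  then show ?thesis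
    unfolding grid_bound_def by (simp add: sum_nonneg increments_nonneg)
next
  case False
  with assms have "j < 2^depth" by simp
  from dyadic_chaining[OF this, of "\<lambda>s. dev p {..quantile s}"]
  show ?thesis
    using grid_0[of 0] unfolding grid_bound_def increments_def grid_def by simp
qed

lemma abs_dev_atMost_le:
  assumes "0 \<le> v" "v \<le> 1"
  shows "\<bar>dev p {..v}\<bar> \<le> grid_bound p + \<bar>dev p {..<1}\<bar> + 2"
proof (cases "v = 1")
  case True
  then show ?thesis
    using abs_dev_grid_le[of "2^depth" p] by simp
next
  case False
  then obtain j where j: "j < 2^depth" "grid depth j \<le> v" "v < grid depth (Suc j)"
    using partition_cell_right[of "grid depth" v "2^depth"] assms by auto
  have width: "gauge (grid depth (Suc j)) - gauge (grid depth j) \<le> 2"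
    using gauge_grid_Suc[OF j(1)] cell_width_le_2 by simp
  have "0 \<le> grid depth j"
    using grid_spec[of j depth] j(1) by simp
  have "dev p {..grid depth j} \<le> dev p {..v} + (gauge v - gauge (grid depth j))"
    using j assms False \<open>0 \<le> grid depth j\<close> by (intro dev_atMost_le_atMost) auto
  moreover have "dev p {..v} \<le> grid_bound p + \<bar>dev p {..<1}\<bar> + (gauge (grid depth (Suc j)) - gauge v)"
  proof (cases "Suc j < 2^depth")
    case True
    then have "dev p {..v} \<le> dev p {..grid depth (Suc j)} + (gauge (grid depth (Suc j)) - gauge v)"
      using j assms grid_less_1 by (intro dev_atMost_le_atMost) auto
    then show ?thesis
      using abs_dev_grid_le[of "Suc j" p] True by simp
  next
    case False
    then have "Suc j = 2^depth"
      using j(1) by simp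
    moreover have "dev p {..v} \<le> dev p {..<1} + (gauge 1 - gauge v)"
      using assms \<open>v \<noteq> 1\<close> by (intro dev_atMost_le_lessThan) auto
    ultimately show ?thesis
      using grid_bound_nonneg[of p] by simp
  qed
  moreover have "\<bar>dev p {..grid depth j}\<bar> \<le> grid_bound p"
    using j(1) by (intro abs_dev_grid_le) simp
  moreover have "gauge (grid depth j) \<le> gauge v" "gauge v \<le> gauge (grid depth (Suc j))"
    using j by (simp_all add: gauge_le_iff)
  ultimately show ?thesis
    using width by linarith
qed

lemma abs_dev_lessThan_le:
  assumes "0 \<le> v" "v \<le> 1"
  shows "\<bar>dev p {..<v}\<bar> \<le> grid_bound p + \<bar>dev p {..<1}\<bar> + \<bar>dev p {..<0}\<bar> + 2"
proof (cases "v = 0")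
  case True
  then show ?thesis
    using grid_bound_nonneg[of p] by simp
next
  case False
  then obtain j where j: "j < 2^depth" "grid depth j < v" "v \<le> grid depth (Suc j)"
    using partition_cell_left[of "grid depth" v "2^depth"] assms by auto
  have width: "gauge (grid depth (Suc j)) - gauge (grid depth j) \<le> 2"
    using gauge_grid_Suc[OF j(1)] cell_width_le_2 by simp
  have "0 \<le> grid depth j"
    using grid_spec[of j depth] j(1) by simp
  have "dev p {..grid depth j} \<le> dev p {..<v} + (gauge v - gauge (grid depth j))"
    using j assms \<open>0 \<le> grid depth j\<close> by (intro dev_atMost_le_lessThan) auto
  moreover have "dev p {..<v} \<le> grid_bound p + \<bar>dev p {..<1}\<bar> + (gauge (grid depth (Suc j)) - gauge v)"
  proof (cases "Suc j < 2^depth")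
    case True
    then have "dev p {..<v} \<le> dev p {..grid depth (Suc j)} + (gauge (grid depth (Suc j)) - gauge v)"
      using j assms False grid_less_1 by (intro dev_lessThan_le_atMost) auto
    then show ?thesis
      using abs_dev_grid_le[of "Suc j" p] True by simp
  next
    case False
    then have "Suc j = 2^depth"
      using j(1) by simp
    moreover have "dev p {..<v} \<le> dev p {..<1} + (gauge 1 - gauge v)"
      using assms \<open>v \<noteq> 0\<close> by (intro dev_lessThan_le_lessThan) auto
    ultimately show ?thesis
      using grid_bound_nonneg[of p] by simp
  qed
  moreover have "\<bar>dev p {..grid depth j}\<bar> \<le> grid_bound p"
    using j(1) by (intro abs_dev_grid_le) simp
  moreover have "gauge (grid depth j) \<le> gauge v" "gauge v \<le> gauge (grid depth (Suc j))"
    using j by (simp_all add: gauge_le_iff)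
  ultimately show ?thesis
    using width by linarith
qed

definition dev_bound :: "('i \<Rightarrow> real) \<Rightarrow> real" where
  "dev_bound p = 2 * grid_bound p + 2 * \<bar>dev p {..<1}\<bar> + \<bar>dev p {..<0}\<bar> + 4"

lemma abs_dev_le_dev_bound:
  "0 \<le> v \<Longrightarrow> v \<le> 1 \<Longrightarrow> \<bar>dev p {..v}\<bar> + \<bar>dev p {..<v}\<bar> \<le> dev_bound p"
  using abs_dev_atMost_le[of v p] abs_dev_lessThan_le[of v p] unfolding dev_bound_def by linarith

lemma prob_space_PiM_J_M: "prob_space (PiM J M)"
  using prob_space_M by (rule prob_space_PiM)

lemma measurable_dev [measurable]:
  assumes "A \<in> sets borel"
  shows "(\<lambda>p. dev p A) \<in> borel_measurable (PiM J M)"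
proof -
  have "(\<lambda>p. p t) \<in> measurable (PiM J M) (M t)" if "t \<in> I" for t
    using I_subset that by (intro measurable_component_singleton) auto
  then have "(\<lambda>p. p t) \<in> borel_measurable (PiM J M)" if "t \<in> I" for t
    using I_subset that sets_M by (subst measurable_cong_sets[OF refl sets_M[symmetric]]) auto
  then show ?thesis
    unfolding dev_def using assms by measurable
qed

lemma measurable_increments [measurable]: "(\<lambda>p. increments p k) \<in> borel_measurable (PiM J M)"
  unfolding increments_def by measurable

lemma abs_grid_increment_le:
  "\<bar>dev p {..grid k i} - dev p {..grid k (i - 1)}\<bar> \<le> 2 * real (card I)"
  using abs_dev_le[of p "{..grid k i}"] abs_dev_le[of p "{..grid k (i - 1)}"] by linarith

lemma grid_increment_power4_le:
  "(dev p {..grid k i} - dev p {..grid k (i - 1)})^4 \<le> (2 * real (card I))^4"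
  using power_mono[OF abs_grid_increment_le[of p k i], of 4] by (simp add: power_even_abs_numeral)

lemma increments_le: "increments p k \<le> 2^k * (2 * real (card I))^4"
proof -
  have "increments p k \<le> (\<Sum>i\<in>{1..<(2::nat)^k}. (2 * real (card I))^4)"
    unfolding increments_def by (intro sum_mono grid_increment_power4_le)
  also have "\<dots> \<le> 2^k * (2 * real (card I))^4"
    by (simp add: mult_right_mono)
  finally show ?thesis .
qed

lemma integrable_abs_dev: "A \<in> sets borel \<Longrightarrow> integrable (PiM J M) (\<lambda>p. \<bar>dev p A\<bar>)"
  using prob_space_PiM_J_M abs_dev_le
  by (intro finite_measure.integrable_const_bound[where B="real (card I)"]) (auto simp: prob_space_def)

lemma integrable_grid_increment_power4:
  "integrable (PiM J M) (\<lambda>p. (dev p {..grid k i} - dev p {..grid k (i - 1)})^4)"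
  using prob_space_PiM_J_M grid_increment_power4_le
  by (intro finite_measure.integrable_const_bound[where B="(2 * real (card I))^4"])
     (auto simp: prob_space_def)

lemma integrable_sqrt_sqrt_increments: "integrable (PiM J M) (\<lambda>p. sqrt (sqrt (increments p k)))"
  using prob_space_PiM_J_M increments_le increments_nonneg
  by (intro finite_measure.integrable_const_bound[where B="sqrt (sqrt (2^k * (2 * real (card I))^4))"])
     (auto simp: prob_space_def)

lemma expectation_dev_power4_le:
  assumes "A \<in> sets borel"
  shows "(\<integral>p. dev p A ^ 4 \<partial>PiM J M)
           \<le> (\<Sum>t\<in>I. w t * measure (M t) A) + 3 * (\<Sum>t\<in>I. w t * measure (M t) A)^2"
  unfolding dev_def using finite_I I_subset prob_space_M weight_bounds assms
  by (intro fourth_moment_weighted_indicators) (auto simp: sets_M)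

lemma expectation_abs_dev_le:
  assumes "A \<in> sets borel"
  shows "(\<integral>p. \<bar>dev p A\<bar> \<partial>PiM J M) \<le> sqrt (2 * real (card I + 1))"
proof -
  interpret prob_space "PiM J M"
    by (rule prob_space_PiM_J_M)
  define n where "n = real (card I + 1)"
  define V where "V = (\<Sum>t\<in>I. w t * measure (M t) A)"
  have "0 \<le> V" "V \<le> n"
  proof -
    have "w t * measure (M t) A \<le> 1" if "t \<in> I" for t
      using weight_bounds[OF that] I_subset that
      by (intro mult_le_one) (auto intro: prob_space.prob_le_1 prob_space_M)
    then have "V \<le> (\<Sum>t\<in>I. 1)"
      unfolding V_def by (intro sum_mono)
    then show "V \<le> n"
      by (simp add: n_def)
    show "0 \<le> V"
      unfolding V_def using weight_bounds by (intro sum_nonneg mult_nonneg_nonneg) auto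
  qed
  have "expectation (\<lambda>p. dev p A ^ 4) \<le> V + 3 * V^2"
    unfolding V_def using assms by (rule expectation_dev_power4_le)
  also have "\<dots> \<le> 4 * n^2"
  proof -
    have "n \<le> n^2"
      using power_increasing[of 1 2 n] by (simp add: n_def)
    moreover have "V^2 \<le> n^2"
      using \<open>0 \<le> V\<close> \<open>V \<le> n\<close> by (intro power_mono)
    ultimately show ?thesis
      using \<open>V \<le> n\<close> by linarith
  qed
  finally have "expectation (\<lambda>p. sqrt (sqrt (dev p A ^ 4))) \<le> sqrt (sqrt (4 * n^2))"
  proof (rule expectation_sqrt_sqrt_le[where K="real (card I) ^ 4", rotated 2])
    show "(\<lambda>p. dev p A ^ 4) \<in> borel_measurable (PiM J M)"
      using assms by measurable
    show "0 \<le> dev p A ^ 4 \<and> dev p A ^ 4 \<le> real (card I) ^ 4" for p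
      using power_mono[OF abs_dev_le[of p A], of 4] by (simp add: power_even_abs_numeral)
    show "0 < 4 * n^2"
      by (simp add: n_def)
  qed
  also have "sqrt (sqrt (4 * n^2)) = sqrt (2 * n)"
    by (simp add: n_def real_sqrt_mult)
  finally show ?thesis
    by (simp add: sqrt_sqrt_power4_eq_abs n_def)
qed

lemma weighted_measure_greaterThanAtMost:
  assumes "0 \<le> a" "a \<le> b" "b < 1"
  shows "(\<Sum>t\<in>I. w t * measure (M t) {a<..b}) \<le> gauge b - gauge a"
proof -
  have "measure (M t) {a<..b} = g t b - g t a" if "t \<in> I" for t
    using measure_atMost_split[OF that assms(2)] assms measure_atMost[OF that] by simp
  then show ?thesis
    using weighted_increment_le_gauge[OF assms(2)] by simp
qed

lemma expectation_grid_increment_le: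
  assumes "i \<in> {1..<2^k}"
  defines "\<delta> \<equiv> (gauge 1 - gauge 0) / 2^k"
  shows "(\<integral>p. (dev p {..grid k i} - dev p {..grid k (i - 1)})^4 \<partial>PiM J M) \<le> \<delta> + 3 * \<delta>^2"
proof -
  define a b where "a = grid k (i - 1)" and "b = grid k i"
  have i: "i - 1 \<le> 2^k" "i \<le> 2^k" "i - 1 < i" "i < 2^k"
    using assms(1) by auto
  have "0 \<le> a"
    using grid_spec[OF i(1)] unfolding a_def by simp
  have "a \<le> b"
    using grid_less_iff[OF i(1,2)] i(3) unfolding a_def b_def by simp
  have "b < 1"
    using grid_less_1[OF i(4)] unfolding b_def .
  define V where "V = (\<Sum>t\<in>I. w t * measure (M t) {a<..b})"
  have "0 \<le> V"
    unfolding V_def using weight_bounds by (intro sum_nonneg mult_nonneg_nonneg) auto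
  have "V \<le> gauge b - gauge a"
    unfolding V_def using \<open>0 \<le> a\<close> \<open>a \<le> b\<close> \<open>b < 1\<close> by (rule weighted_measure_greaterThanAtMost)
  also have "gauge b - gauge a = \<delta>"
    using gauge_grid_Suc[of "i - 1" k] i unfolding a_def b_def \<delta>_def by simp
  finally have "V \<le> \<delta>" .
  have "(\<integral>p. (dev p {..b} - dev p {..a})^4 \<partial>PiM J M) = (\<integral>p. dev p {a<..b}^4 \<partial>PiM J M)"
    using dev_atMost_split[OF \<open>a \<le> b\<close>] by simp
  also have "\<dots> \<le> V + 3 * V^2"
    unfolding V_def by (rule expectation_dev_power4_le) simp
  also have "\<dots> \<le> \<delta> + 3 * \<delta>^2"
    using \<open>0 \<le> V\<close> \<open>V \<le> \<delta>\<close> by (intro add_mono mult_left_mono power_mono) auto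
  finally show ?thesis
    unfolding a_def b_def .
qed

lemma expectation_increments_le:
  assumes "1 \<le> k" "k \<le> depth"
  shows "(\<integral>p. increments p k \<partial>PiM J M) \<le> 4 * real (card I + 1)^2 / 2^k"
proof -
  define n where "n = real (card I + 1)"
  define \<delta> where "\<delta> = (gauge 1 - gauge 0) / 2^k"
  have "0 \<le> \<delta>"
    unfolding \<delta>_def using gauge_1_minus_gauge_0(1) by simp
  have "(\<integral>p. increments p k \<partial>PiM J M)
      = (\<Sum>i\<in>{1..<2^k}. \<integral>p. (dev p {..grid k i} - dev p {..grid k (i - 1)})^4 \<partial>PiM J M)"
    unfolding increments_def by (intro Bochner_Integration.integral_sum integrable_grid_increment_power4)
  also have "\<dots> \<le> (\<Sum>i\<in>{1..<(2::nat)^k}. \<delta> + 3 * \<delta>^2)"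
    unfolding \<delta>_def by (intro sum_mono expectation_grid_increment_le)
  also have "\<dots> \<le> 2^k * (\<delta> + 3 * \<delta>^2)"
    using \<open>0 \<le> \<delta>\<close> by (simp add: mult_right_mono)
  also have "\<dots> = (gauge 1 - gauge 0) + 3 * (gauge 1 - gauge 0)^2 / 2^k"
    unfolding \<delta>_def by (simp add: field_simps power2_eq_square)
  also have "\<dots> \<le> n + 3 * n^2 / 2^k"
    using gauge_1_minus_gauge_0 unfolding n_def
    by (intro add_mono divide_right_mono mult_left_mono power_mono) auto
  also have "\<dots> \<le> 4 * n^2 / 2^k"
  proof -
    have "(2::real)^k \<le> 2^depth"
      using assms by (intro power_increasing) auto
    also have "\<dots> = real (2^depth)"
      by simp
    also have "\<dots> \<le> n"
      unfolding n_def depth_def of_nat_le_iff by (rule floor_log_exp2_le) simp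
    finally have "n * 2^k \<le> n^2"
      by (simp add: n_def power2_eq_square mult_left_mono)
    then show ?thesis
      by (simp add: field_simps)
  qed
  finally show ?thesis
    unfolding n_def .
qed

lemma expectation_sqrt_sqrt_increments_le:
  assumes "1 \<le> k" "k \<le> depth"
  shows "(\<integral>p. sqrt (sqrt (increments p k)) \<partial>PiM J M) \<le> sqrt (sqrt (4 * real (card I + 1)^2 / 2^k))"
  using expectation_increments_le[OF assms] increments_nonneg increments_le
  by (intro prob_space.expectation_sqrt_sqrt_le[OF prob_space_PiM_J_M, where K="2^k * (2 * real (card I))^4"])
     auto

lemma integrable_grid_bound: "integrable (PiM J M) grid_bound"
  unfolding grid_bound_def using integrable_abs_dev integrable_sqrt_sqrt_increments by auto

lemma expectation_grid_bound_le: "(\<integral>p. grid_bound p \<partial>PiM J M) \<le> 8 * sqrt (2 * real (card I + 1))"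
proof -
  define n where "n = real (card I + 1)"
  have "(\<integral>p. grid_bound p \<partial>PiM J M) = (\<integral>p. \<bar>dev p {..0}\<bar> \<partial>PiM J M)
      + (\<Sum>k\<in>{1..depth}. \<integral>p. sqrt (sqrt (increments p k)) \<partial>PiM J M) + (\<integral>p. \<bar>dev p {..1}\<bar> \<partial>PiM J M)"
    unfolding grid_bound_def using integrable_abs_dev integrable_sqrt_sqrt_increments
    by (simp add: Bochner_Integration.integral_sum)
  also have "\<dots> \<le> sqrt (2 * n) + (\<Sum>k\<in>{1..depth}. sqrt (sqrt (4 * n^2 / 2^k))) + sqrt (2 * n)"
    using expectation_abs_dev_le[of "{..0}"] expectation_abs_dev_le[of "{..1}"]
      expectation_sqrt_sqrt_increments_le
    unfolding n_def by (intro add_mono sum_mono) auto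
  also have "\<dots> \<le> sqrt (2 * n) + 6 * sqrt (sqrt (4 * n^2)) + sqrt (2 * n)"
    by (intro add_mono sum_sqrt_sqrt_divide_power2_le) auto
  also have "sqrt (sqrt (4 * n^2)) = sqrt (2 * n)"
    by (simp add: n_def real_sqrt_mult)
  finally show ?thesis
    unfolding n_def by simp
qed

lemma integrable_dev_bound: "integrable (PiM J M) dev_bound"
proof -
  interpret prob_space "PiM J M"
    by (rule prob_space_PiM_J_M)
  show ?thesis
    unfolding dev_bound_def using integrable_grid_bound integrable_abs_dev by auto
qed

lemma expectation_dev_bound_le:
  "(\<integral>p. dev_bound p \<partial>PiM J M) \<le> 19 * sqrt (2 * real (card I + 1)) + 4"
proof -
  interpret prob_space "PiM J M"
    by (rule prob_space_PiM_J_M)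
  have "(\<integral>p. dev_bound p \<partial>PiM J M) = 2 * (\<integral>p. grid_bound p \<partial>PiM J M)
      + 2 * (\<integral>p. \<bar>dev p {..<1}\<bar> \<partial>PiM J M) + (\<integral>p. \<bar>dev p {..<0}\<bar> \<partial>PiM J M) + 4"
    unfolding dev_bound_def using integrable_grid_bound integrable_abs_dev by (simp add: prob_space)
  then show ?thesis
    using expectation_grid_bound_le expectation_abs_dev_le[of "{..<1}"]
      expectation_abs_dev_le[of "{..<0}"]
    by simp
qed

end

section \<open>Hedging with two experts\<close>

lemma exp_le_quadratic:
  fixes y :: real
  assumes "\<bar>y\<bar> \<le> 1"
  shows "exp y \<le> 1 + y + y^2"
proof (cases "0 \<le> y")
  case True
  then show ?thesis
    using assms exp_bound[of y] by simp
next
  case False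
  define z where "z = - y"
  have z: "0 < z" "z \<le> 1"
    using False assms unfolding z_def by auto
  have "exp z * (1 - z + z^2) \<ge> (1 + z) * (1 - z + z^2)"
    using z by (intro mult_right_mono exp_ge_add_one_self) (auto simp: power2_eq_square)
  also have "(1 + z) * (1 - z + z^2) \<ge> 1"
    using z by (simp add: algebra_simps power2_eq_square power3_eq_cube)
  finally have "exp (-z) \<le> 1 - z + z^2"
    by (simp add: exp_minus field_simps)
  then show ?thesis
    unfolding z_def by simp
qed

definition hedge_potential :: "real \<Rightarrow> real \<Rightarrow> real" where
  "hedge_potential e z = ln (exp (e * z) + exp (- (e * z)))"

lemma hedge_potential_add:
  "hedge_potential e (A + a)
     = hedge_potential e A + ln (S (e * A) * exp (e * a) + (1 - S (e * A)) * exp (- (e * a)))"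
proof -
  define s q y where "s = exp (e * A) + exp (- (e * A))" and "q = S (e * A)" and "y = e * a"
  have "0 < s"
    unfolding s_def by (simp add: add_pos_pos)
  have "s * q = exp (e * A)"
    unfolding s_def q_def S_def using \<open>0 < s\<close> s_def by simp
  then have "s * (1 - q) = exp (- (e * A))"
    by (simp add: s_def right_diff_distrib)
  have "exp (e * (A + a)) + exp (- (e * (A + a))) = (s * q) * exp y + (s * (1 - q)) * exp (- y)"
    unfolding \<open>s * q = exp (e * A)\<close> \<open>s * (1 - q) = exp (- (e * A))\<close> y_def
    by (simp add: distrib_left exp_add exp_diff exp_minus field_simps)
  also have "\<dots> = s * (q * exp y + (1 - q) * exp (- y))"
    by (simp add: algebra_simps)
  finally have ratio: "exp (e * (A + a)) + exp (- (e * (A + a))) = s * (q * exp y + (1 - q) * exp (- y))" .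
  have "0 < q * exp y + (1 - q) * exp (- y)"
    using S_nonneg[of "e * A"] S_le_1[of "e * A"] unfolding q_def[symmetric]
    by (cases "q = 0") (auto intro: add_pos_nonneg)
  then show ?thesis
    unfolding hedge_potential_def ratio s_def[symmetric] q_def[symmetric] y_def[symmetric]
    using \<open>0 < s\<close> by (simp add: ln_mult)
qed

lemma hedge_potential_step:
  assumes "0 < e" "e \<le> 1" "\<bar>a\<bar> \<le> 1"
  shows "e * ((1 - 2 * S (e * A)) * a) \<le> hedge_potential e A - hedge_potential e (A + a) + e^2"
proof -
  define q y where "q = S (e * A)" and "y = e * a"
  have q: "0 \<le> q" "q \<le> 1"
    unfolding q_def by (simp_all add: S_nonneg S_le_1)
  have "\<bar>y\<bar> \<le> 1" "y^2 \<le> e^2"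
    using assms unfolding y_def
    by (simp_all add: abs_mult mult_le_one power_mult_distrib abs_square_le_1 mult_left_le)
  have "q * exp y + (1 - q) * exp (- y) \<le> q * (1 + y + y^2) + (1 - q) * (1 + (- y) + (- y)^2)"
    using q exp_le_quadratic[of y] exp_le_quadratic[of "- y"] \<open>\<bar>y\<bar> \<le> 1\<close>
    by (intro add_mono mult_left_mono) auto
  also have "\<dots> = 1 + (2 * q - 1) * y + y^2"
    by (simp add: algebra_simps power2_eq_square)
  finally have le: "q * exp y + (1 - q) * exp (- y) \<le> 1 + (2 * q - 1) * y + y^2" .
  have pos: "0 < q * exp y + (1 - q) * exp (- y)"
    using q by (cases "q = 0") (auto intro: add_pos_nonneg)
  have "hedge_potential e (A + a) = hedge_potential e A + ln (q * exp y + (1 - q) * exp (- y))"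
    unfolding q_def y_def by (rule hedge_potential_add)
  also have "ln (q * exp y + (1 - q) * exp (- y)) \<le> (2 * q - 1) * y + y^2"
    using le ln_le_minus_one[OF pos] by linarith
  finally show ?thesis
    using \<open>y^2 \<le> e^2\<close> unfolding q_def y_def by (simp add: algebra_simps)
qed

lemma hedge_potential_bounds:
  assumes "0 < e"
  shows "e * \<bar>z\<bar> \<le> hedge_potential e z" "hedge_potential e z \<le> ln 2 + e * \<bar>z\<bar>"
proof -
  have "exp (e * \<bar>z\<bar>) \<le> exp (e * z) + exp (- (e * z))"
    by (cases "0 \<le> z") (auto simp: add_increasing add_increasing2 less_imp_le)
  then show "e * \<bar>z\<bar> \<le> hedge_potential e z"
    unfolding hedge_potential_def by (subst ln_ge_iff) (auto simp: add_pos_pos)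
  have "exp (e * z) + exp (- (e * z)) \<le> 2 * exp (e * \<bar>z\<bar>)"
    using assms by (cases "0 \<le> z") (auto simp: mult_nonneg_nonneg mult_pos_neg less_imp_le)
  then have "hedge_potential e z \<le> ln (2 * exp (e * \<bar>z\<bar>))"
    unfolding hedge_potential_def by (simp add: add_pos_pos)
  then show "hedge_potential e z \<le> ln 2 + e * \<bar>z\<bar>"
    by (simp add: ln_mult)
qed

lemma hedge_potential_telescope:
  assumes "0 < e" "e \<le> 1" "1 \<le> T" "\<And>t. t \<in> {1..T} \<Longrightarrow> \<bar>a t\<bar> \<le> 1"
  shows "e * (\<Sum>t=2..T. (1 - 2 * S (e * (\<Sum>s=1..t-1. a s))) * a t)
     \<le> hedge_potential e (a 1) - hedge_potential e (\<Sum>s=1..T. a s) + (real T - 1) * e^2"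
  using assms(3,4)
proof (induction T rule: dec_induct)
  case base
  then show ?case by simp
next
  case (step n)
  have "e * (\<Sum>t=2..Suc n. (1 - 2 * S (e * (\<Sum>s=1..t-1. a s))) * a t)
      = e * (\<Sum>t=2..n. (1 - 2 * S (e * (\<Sum>s=1..t-1. a s))) * a t)
        + e * ((1 - 2 * S (e * (\<Sum>s=1..n. a s))) * a (Suc n))"
    using step.hyps by (simp add: distrib_left)
  also have "\<dots> \<le> (hedge_potential e (a 1) - hedge_potential e (\<Sum>s=1..n. a s) + (real n - 1) * e^2)
      + (hedge_potential e (\<Sum>s=1..n. a s) - hedge_potential e ((\<Sum>s=1..n. a s) + a (Suc n)) + e^2)"
    using step by (intro add_mono hedge_potential_step assms(1,2)) auto
  finally show ?case
    by (simp add: algebra_simps)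
qed

lemma hedge_regret_le:
  assumes "0 < e" "e \<le> 1" "1 \<le> T" "\<And>t. t \<in> {1..T} \<Longrightarrow> \<bar>a t\<bar> \<le> 1"
  shows "(\<Sum>t=2..T. (1 - 2 * S (e * (\<Sum>s=1..t-1. a s))) * a t) + \<bar>\<Sum>t=1..T. a t\<bar>
           \<le> 1 + ln 2 / e + (real T - 1) * e"
proof -
  let ?A = "\<Sum>t=1..T. a t"
  have "e * \<bar>a 1\<bar> \<le> e"
    using assms(1,3) assms(4)[of 1] by (simp add: mult_left_le)
  then have "e * (\<Sum>t=2..T. (1 - 2 * S (e * (\<Sum>s=1..t-1. a s))) * a t)
      \<le> ln 2 + e - e * \<bar>?A\<bar> + (real T - 1) * e^2"
    using hedge_potential_telescope[of e T a, OF assms] hedge_potential_bounds[OF assms(1), of "a 1"]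
      hedge_potential_bounds[OF assms(1), of ?A] by linarith
  also have "\<dots> = e * (1 + ln 2 / e + (real T - 1) * e - \<bar>?A\<bar>)"
    using assms(1) by (simp add: field_simps power2_eq_square)
  finally show ?thesis
    using assms(1) by simp
qed

definition fh_sgn_mean :: "nat \<Rightarrow> (nat \<Rightarrow> real) \<Rightarrow> nat \<Rightarrow> real \<Rightarrow> real" where
  "fh_sgn_mean T x t v = 1 - measure (fh_dist T x t) {..v} - measure (fh_dist T x t) {..<v}"

lemma abs_fh_sgn_mean_le: "\<bar>fh_sgn_mean T x t v\<bar> \<le> 1"
proof -
  interpret prob_space "fh_dist T x t"
    by (rule prob_space_fh_dist)
  show ?thesis
    unfolding fh_sgn_mean_def abs_le_iff
    using prob_le_1[of "{..v}"] prob_le_1[of "{..<v}"] measure_nonneg[of "fh_dist T x t" "{..v}"]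
      measure_nonneg[of "fh_dist T x t" "{..<v}"] by linarith
qed

lemma fh_cdf_core_Suc:
  assumes "1 \<le> n"
  shows "fh_cdf_core T x (Suc n) v = S (eta T * (\<Sum>s=1..n. (v - x s)))"
proof -
  have "real n * (v - xhat x n) = (\<Sum>s=1..n. (v - x s))"
    using assms unfolding xhat_def by (simp add: sum_subtractf field_simps)
  then show ?thesis
    unfolding fh_cdf_core_def by (simp add: mult.assoc)
qed

lemma fh_sgn_mean_le:
  assumes "2 \<le> t" "0 \<le> v" "v \<le> 1" "x t \<in> {0, 1}"
  shows "fh_sgn_mean T x t v * (v - x t) \<le> (1 - 2 * fh_cdf_core T x t v) * (v - x t)"
proof -
  define q where "q = fh_cdf_core T x t v"
  have "0 \<le> q" "q \<le> 1"
    unfolding q_def using fh_cdf_core_bounds by auto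
  have atMost: "measure (fh_dist T x t) {..v} = (if v < 1 then q else 1)"
    using assms unfolding measure_fh_dist_atMost q_def by (simp add: fh_cdf_def fh_cdf_core_def)
  have lessThan: "measure (fh_dist T x t) {..<v} = (if v = 0 then 0 else q)"
    using assms unfolding measure_fh_dist_lessThan q_def by auto
  consider "v = 0" | "0 < v" "v < 1" | "v = 1"
    using assms by linarith
  then show ?thesis
    unfolding fh_sgn_mean_def atMost lessThan q_def[symmetric]
    using assms(4) \<open>0 \<le> q\<close> \<open>q \<le> 1\<close> by cases (auto simp: algebra_simps)
qed

lemma abs_diff_binary_le_1: "y \<in> {0, 1} \<Longrightarrow> 0 \<le> v \<Longrightarrow> v \<le> 1 \<Longrightarrow> \<bar>v - y\<bar> \<le> (1::real)"
  by (auto simp: abs_le_iff)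

lemma eta_regret_terms_le:
  assumes "1 \<le> T"
  shows "ln 2 / eta T + (real T - 1) * eta T \<le> 2 * sqrt (real T)"
proof -
  have "ln 2 / eta T \<le> sqrt (real T)"
    using ln_2_less_1 mult_right_mono[of "ln 2" 1 "sqrt (real T)"] unfolding eta_def by simp
  moreover have "(real T - 1) * eta T \<le> real T * eta T"
    unfolding eta_def by (simp add: divide_right_mono)
  moreover have "real T * eta T = sqrt (real T)"
    unfolding eta_def by (simp add: real_div_sqrt)
  ultimately show ?thesis
    by linarith
qed

lemma fh_expected_regret_le:
  assumes "1 \<le> T" "\<forall>t\<in>{1..T}. x t \<in> {0, 1}" "0 \<le> v" "v \<le> 1"
  shows "(\<Sum>t=1..T. fh_sgn_mean T x t v * (v - x t)) + \<bar>\<Sum>t=1..T. (v - x t)\<bar> \<le> 2 + 2 * sqrt (real T)"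
proof -
  define e where "e = eta T"
  have "0 < e" "e \<le> 1"
    unfolding e_def eta_def using assms(1) by auto
  have a: "\<bar>v - x t\<bar> \<le> 1" if "t \<in> {1..T}" for t
    using assms(2-4) that by (intro abs_diff_binary_le_1) auto
  have "\<bar>fh_sgn_mean T x 1 v * (v - x 1)\<bar> \<le> 1 * 1"
    using abs_fh_sgn_mean_le[of T x 1 v] a[of 1] assms(1) unfolding abs_mult by (intro mult_mono) auto
  then have first: "fh_sgn_mean T x 1 v * (v - x 1) \<le> 1"
    by simp
  have later: "fh_sgn_mean T x t v * (v - x t) \<le> (1 - 2 * S (e * (\<Sum>s=1..t-1. (v - x s)))) * (v - x t)"
    if "t \<in> {2..T}" for t
  proof -
    have "1 \<le> t - 1" "Suc (t - 1) = t" "x t \<in> {0, 1}"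
      using that assms(2) by auto
    then show ?thesis
      using fh_sgn_mean_le[of t v x T] fh_cdf_core_Suc[of "t - 1" T x v] that assms(3,4)
      by (simp add: e_def)
  qed
  have "(\<Sum>t=1..T. fh_sgn_mean T x t v * (v - x t))
      = fh_sgn_mean T x 1 v * (v - x 1) + (\<Sum>t=2..T. fh_sgn_mean T x t v * (v - x t))"
    using assms(1) by (simp add: sum.atLeast_Suc_atMost numeral_2_eq_2)
  also have "\<dots> \<le> 1 + (\<Sum>t=2..T. (1 - 2 * S (e * (\<Sum>s=1..t-1. (v - x s)))) * (v - x t))"
    using first later by (intro add_mono sum_mono) auto
  finally show ?thesis
    using hedge_regret_le[of e T "\<lambda>t. v - x t", OF \<open>0 < e\<close> \<open>e \<le> 1\<close> assms(1) a]
      eta_regret_terms_le[OF assms(1)] unfolding e_def by linarith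
qed

section \<open>V-calibration\<close>

lemma ell_V_binary: "y \<in> {0, 1} \<Longrightarrow> ell_V v p y = sgn (p - v) * (v - y)"
  unfolding ell_V_def by (auto simp: sgn_if)

definition signed_regret :: "nat \<Rightarrow> (nat \<Rightarrow> real) \<Rightarrow> (nat \<Rightarrow> real) \<Rightarrow> real \<Rightarrow> real" where
  "signed_regret T s x v = (\<Sum>t=1..T. s t * (v - x t)) + \<bar>\<Sum>t=1..T. (v - x t)\<bar>"

lemma Reg_ell_V_eq:
  assumes "1 \<le> T" "\<forall>t\<in>{1..T}. x t \<in> {0, 1}"
  shows "Reg (ell_V v) T p x = signed_regret T (\<lambda>t. sgn (p t - v)) x v"
proof -
  have sum_eq: "(\<Sum>t=1..T. (v - x t)) = real T * (v - beta T x)"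
    using assms(1) unfolding beta_def by (simp add: sum_subtractf algebra_simps)
  have "(\<Sum>t=1..T. ell_V v (beta T x) (x t)) = sgn (beta T x - v) * (\<Sum>t=1..T. (v - x t))"
    using assms(2) by (simp add: ell_V_binary sum_distrib_left)
  also have "\<dots> = - \<bar>\<Sum>t=1..T. (v - x t)\<bar>"
    unfolding sum_eq using assms(1) by (auto simp: sgn_if abs_mult algebra_simps)
  finally show ?thesis
    using assms(2) unfolding Reg_def signed_regret_def by (simp add: ell_V_binary)
qed

lemma signed_regret_lipschitz:
  assumes "\<And>t. t \<in> {1..T} \<Longrightarrow> \<bar>s t\<bar> \<le> 1"
  shows "signed_regret T s x v - 2 * real T * \<bar>r - v\<bar> \<le> signed_regret T s x r"
proof -
  have "\<bar>s t * (r - x t) - s t * (v - x t)\<bar> \<le> \<bar>r - v\<bar>" if "t \<in> {1..T}" for t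
  proof -
    have "\<bar>s t * (r - x t) - s t * (v - x t)\<bar> = \<bar>s t\<bar> * \<bar>r - v\<bar>"
      by (simp add: abs_mult flip: right_diff_distrib)
    also have "\<dots> \<le> \<bar>r - v\<bar>"
      using assms[OF that] by (simp add: mult_left_le_one_le)
    finally show ?thesis .
  qed
  then have "\<bar>(\<Sum>t=1..T. s t * (r - x t)) - (\<Sum>t=1..T. s t * (v - x t))\<bar> \<le> (\<Sum>t=1..T. \<bar>r - v\<bar>)"
    unfolding sum_subtractf[symmetric] by (intro order.trans[OF sum_abs sum_mono])
  moreover have "\<bar>\<bar>\<Sum>t=1..T. (r - x t)\<bar> - \<bar>\<Sum>t=1..T. (v - x t)\<bar>\<bar> \<le> real T * \<bar>r - v\<bar>"
  proof -
    have "(\<Sum>t=1..T. (r - x t)) - (\<Sum>t=1..T. (v - x t)) = real T * (r - v)"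
      by (simp add: sum_subtractf algebra_simps)
    then show ?thesis
      using abs_triangle_ineq3[of "\<Sum>t=1..T. (r - x t)" "\<Sum>t=1..T. (v - x t)"] by (simp add: abs_mult)
  qed
  ultimately show ?thesis
    unfolding signed_regret_def by simp linarith
qed

lemma abs_Reg_ell_V_le:
  assumes "1 \<le> T" "\<forall>t\<in>{1..T}. x t \<in> {0, 1}" "0 \<le> v" "v \<le> 1"
  shows "\<bar>Reg (ell_V v) T p x\<bar> \<le> 2 * real T"
proof -
  have "\<bar>v - x t\<bar> \<le> 1" if "t \<in> {1..T}" for t
    using assms(2-4) that by (intro abs_diff_binary_le_1) auto
  then have "\<bar>sgn (p t - v) * (v - x t)\<bar> \<le> 1" "\<bar>v - x t\<bar> \<le> 1" if "t \<in> {1..T}" for t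
    using that by (auto simp: abs_mult abs_sgn_eq)
  then have "\<bar>\<Sum>t=1..T. sgn (p t - v) * (v - x t)\<bar> \<le> real T" "\<bar>\<Sum>t=1..T. (v - x t)\<bar> \<le> real T"
    using abs_sum_le_card[of "{1..T}"] by auto
  then show ?thesis
    unfolding Reg_ell_V_eq[OF assms(1,2)] signed_regret_def by linarith
qed

lemma sgn_locally_constant:
  fixes P :: "real set"
  assumes "finite P"
  obtains d where "0 < d"
    and "\<And>p r. p \<in> P \<Longrightarrow> v < r \<Longrightarrow> r < v + d \<Longrightarrow> sgn (p - r) = (if p \<le> v then -1 else 1)"
    and "\<And>p r. p \<in> P \<Longrightarrow> v - d < r \<Longrightarrow> r < v \<Longrightarrow> sgn (p - r) = (if p < v then -1 else 1)"
proof -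
  obtain d where "0 < d" and far: "\<And>p. p \<in> P \<Longrightarrow> p \<noteq> v \<Longrightarrow> d \<le> \<bar>p - v\<bar>"
    using finite_set_avoid[OF assms, of v] by (auto simp: dist_real_def abs_minus_commute)
  show ?thesis
  proof (rule that[OF \<open>0 < d\<close>])
    fix p r assume "p \<in> P" "v < r" "r < v + d"
    then show "sgn (p - r) = (if p \<le> v then -1 else 1)"
      using far[of p] by (cases "p = v") (auto simp: sgn_if)
  next
    fix p r assume "p \<in> P" "v - d < r" "r < v"
    then show "sgn (p - r) = (if p < v then -1 else 1)"
      using far[of p] by (cases "p = v") (auto simp: sgn_if)
  qed
qed

lemma Rats_near_in_interval:
  fixes a b v \<delta> :: real
  assumes "a < b" "a \<le> v" "v \<le> b" "0 < \<delta>"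
  shows "\<exists>r\<in>\<rat>. a < r \<and> r < b \<and> \<bar>r - v\<bar> < \<delta>"
proof -
  obtain r where "r \<in> \<rat>" "max a (v - \<delta>) < r" "r < min b (v + \<delta>)"
    using Rats_dense_in_real[of "max a (v - \<delta>)" "min b (v + \<delta>)"] assms by auto
  then show ?thesis
    by auto
qed

lemma signed_regret_sgn_average:
  "signed_regret T (\<lambda>t. sgn (p t - v)) x v
     = (signed_regret T (\<lambda>t. if p t \<le> v then -1 else 1) x v
        + signed_regret T (\<lambda>t. if p t < v then -1 else 1) x v) / 2"
proof -
  let ?R = "\<lambda>t. if p t \<le> v then -1 else 1" and ?L = "\<lambda>t. if p t < v then -1 else (1::real)"
  have "(\<Sum>t=1..T. sgn (p t - v) * (v - x t)) = (\<Sum>t=1..T. (?R t * (v - x t) + ?L t * (v - x t)) / 2)"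
    by (intro sum.cong) (auto simp: sgn_if)
  also have "\<dots> = ((\<Sum>t=1..T. ?R t * (v - x t)) + (\<Sum>t=1..T. ?L t * (v - x t))) / 2"
    unfolding sum_divide_distrib[symmetric] sum.distrib ..
  finally show ?thesis
    unfolding signed_regret_def by simp
qed

lemma Reg_ell_V_le_rational:
  assumes "1 \<le> T" "\<forall>t\<in>{1..T}. x t \<in> {0, 1}" "0 \<le> v" "v \<le> 1" "0 < e"
  shows "\<exists>r\<in>{0..1} \<inter> \<rat>. Reg (ell_V v) T p x - e \<le> Reg (ell_V r) T p x"
proof -
  consider "v = 0" | "v = 1" | "0 < v" "v < 1"
    using assms(3,4) by linarith
  then show ?thesis
  proof cases
    case 3
    obtain d where "0 < d"
      and right: "\<And>q r. q \<in> p ` {1..T} \<Longrightarrow> v < r \<Longrightarrow> r < v + d \<Longrightarrow> sgn (q - r) = (if q \<le> v then -1 else 1)"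
      and left: "\<And>q r. q \<in> p ` {1..T} \<Longrightarrow> v - d < r \<Longrightarrow> r < v \<Longrightarrow> sgn (q - r) = (if q < v then -1 else 1)"
      by (rule sgn_locally_constant[of "p ` {1..T}" v]) auto
    \<comment> \<open>\<open>R\<close> and \<open>L\<close> are the sign patterns just right and just left of \<open>v\<close>.\<close>
    define R L :: "nat \<Rightarrow> real"
      where "R t = (if p t \<le> v then -1 else 1)" and "L t = (if p t < v then -1 else 1)" for t
    have unit: "\<And>t. \<bar>R t\<bar> \<le> 1" "\<And>t. \<bar>L t\<bar> \<le> 1"
      by (simp_all add: R_def L_def)
    have "Reg (ell_V v) T p x \<le> signed_regret T R x v \<or> Reg (ell_V v) T p x \<le> signed_regret T L x v"
      using signed_regret_sgn_average[of T p v x] unfolding Reg_ell_V_eq[OF assms(1,2)] R_def L_def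
      by argo
    moreover have "0 < e / (2 * real T)"
      using assms(1,5) by simp
    moreover have "2 * real T * \<bar>r - v\<bar> \<le> e" if "\<bar>r - v\<bar> < e / (2 * real T)" for r
      using that assms(1) by (simp add: pos_less_divide_eq mult.commute)
    ultimately show ?thesis
    proof (elim disjE)
      assume "Reg (ell_V v) T p x \<le> signed_regret T R x v"
      moreover obtain r where r: "r \<in> \<rat>" "v < r" "r < min (v + d) 1" "\<bar>r - v\<bar> < e / (2 * real T)"
        using Rats_near_in_interval[of v "min (v + d) 1" v "e / (2 * real T)"] \<open>0 < d\<close> 3
          \<open>0 < e / (2 * real T)\<close> by auto
      moreover have "Reg (ell_V r) T p x = signed_regret T R x r"
        unfolding Reg_ell_V_eq[OF assms(1,2)] signed_regret_def R_def using r right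
        by (intro arg_cong2[where f="(+)"] sum.cong) auto
      ultimately show ?thesis
        using signed_regret_lipschitz[of T R x v r] unit \<open>\<And>r. _ \<Longrightarrow> 2 * real T * \<bar>r - v\<bar> \<le> e\<close>[of r] 3
        by (intro bexI[of _ r]) fastforce+
    next
      assume "Reg (ell_V v) T p x \<le> signed_regret T L x v"
      moreover obtain r where r: "r \<in> \<rat>" "max (v - d) 0 < r" "r < v" "\<bar>r - v\<bar> < e / (2 * real T)"
        using Rats_near_in_interval[of "max (v - d) 0" v v "e / (2 * real T)"] \<open>0 < d\<close> 3
          \<open>0 < e / (2 * real T)\<close> by auto
      moreover have "Reg (ell_V r) T p x = signed_regret T L x r"
        unfolding Reg_ell_V_eq[OF assms(1,2)] signed_regret_def L_def using r left
        by (intro arg_cong2[where f="(+)"] sum.cong) auto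
      ultimately show ?thesis
        using signed_regret_lipschitz[of T L x v r] unit \<open>\<And>r. _ \<Longrightarrow> 2 * real T * \<bar>r - v\<bar> \<le> e\<close>[of r] 3
        by (intro bexI[of _ r]) fastforce+
    qed
  qed (use assms(5) in \<open>auto intro: bexI[of _ 0] bexI[of _ 1]\<close>)
qed

definition fh_sgn_dev :: "nat \<Rightarrow> (nat \<Rightarrow> real) \<Rightarrow> nat \<Rightarrow> (nat \<Rightarrow> real) \<Rightarrow> real \<Rightarrow> real" where
  "fh_sgn_dev T x t p v = sgn (p t - v) - fh_sgn_mean T x t v"

lemma abs_fh_sgn_dev_le: "\<bar>fh_sgn_dev T x t p v\<bar> \<le> 2"
  using abs_fh_sgn_mean_le[of T x t v] unfolding fh_sgn_dev_def by (auto simp: sgn_if)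

context
  fixes T :: nat and x :: "nat \<Rightarrow> real"
  assumes T: "1 \<le> T" and x: "\<forall>t\<in>{1..T}. x t \<in> {0, 1}"
begin

lemma bdd_above_Reg_ell_V: "A \<subseteq> {0..1} \<Longrightarrow> bdd_above ((\<lambda>v. Reg (ell_V v) T p x) ` A)"
  using abs_Reg_ell_V_le[OF T x] by (intro bdd_aboveI[where M="2 * real T"]) (auto simp: abs_le_iff)

lemma VCal_eq_SUP_rational: "VCal T p x = (SUP r\<in>{0..1} \<inter> \<rat>. Reg (ell_V r) T p x)"
proof (rule antisym)
  show "VCal T p x \<le> (SUP r\<in>{0..1} \<inter> \<rat>. Reg (ell_V r) T p x)"
    unfolding VCal_def
  proof (rule cSUP_least)
    fix v :: real assume "v \<in> {0..1}"
    show "Reg (ell_V v) T p x \<le> (SUP r\<in>{0..1} \<inter> \<rat>. Reg (ell_V r) T p x)"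
    proof (rule field_le_epsilon)
      fix e :: real assume "0 < e"
      then obtain r where "r \<in> {0..1} \<inter> \<rat>" "Reg (ell_V v) T p x - e \<le> Reg (ell_V r) T p x"
        using Reg_ell_V_le_rational[OF T x, of v e p] \<open>v \<in> {0..1}\<close> by auto
      moreover have "Reg (ell_V r) T p x \<le> (SUP r\<in>{0..1} \<inter> \<rat>. Reg (ell_V r) T p x)"
        using \<open>r \<in> {0..1} \<inter> \<rat>\<close> by (intro cSUP_upper bdd_above_Reg_ell_V) auto
      ultimately show "Reg (ell_V v) T p x \<le> (SUP r\<in>{0..1} \<inter> \<rat>. Reg (ell_V r) T p x) + e"
        by linarith
    qed
  qed simp
  have "{0..1::real} \<inter> \<rat> \<noteq> {}"
    using Rats_0 by fastforce
  then show "(SUP r\<in>{0..1} \<inter> \<rat>. Reg (ell_V r) T p x) \<le> VCal T p x"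
    unfolding VCal_def by (rule cSUP_subset_mono) (auto intro: bdd_above_Reg_ell_V)
qed

lemma measurable_coordinate_fh_measure [measurable]:
  "t \<in> {1..T} \<Longrightarrow> (\<lambda>p. p t) \<in> borel_measurable (fh_measure T x)"
  unfolding fh_measure_def
  by (subst measurable_cong_sets[OF refl sets_fh_dist[symmetric]]) (rule measurable_component_singleton)

lemma measurable_VCal: "(\<lambda>p. VCal T p x) \<in> borel_measurable (fh_measure T x)"
proof -
  have "countable ({0..1::real} \<inter> \<rat>)"
    by (blast intro: countable_subset countable_rat)
  moreover have "(\<lambda>p. Reg (ell_V r) T p x) \<in> borel_measurable (fh_measure T x)" for r
    unfolding Reg_def ell_V_def by measurable
  ultimately show ?thesis
    unfolding VCal_eq_SUP_rational by (rule borel_measurable_cSUP) (auto intro: bdd_above_Reg_ell_V)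
qed

lemma abs_VCal_le: "\<bar>VCal T p x\<bar> \<le> 2 * real T"
proof -
  have "VCal T p x \<le> 2 * real T"
    unfolding VCal_def using abs_Reg_ell_V_le[OF T x] by (intro cSUP_least) (auto simp: abs_le_iff)
  moreover have "Reg (ell_V 0) T p x \<le> VCal T p x"
    unfolding VCal_def by (intro cSUP_upper bdd_above_Reg_ell_V) auto
  moreover have "- (2 * real T) \<le> Reg (ell_V 0) T p x"
    using abs_Reg_ell_V_le[OF T x, of 0 p] by auto
  ultimately show ?thesis
    by linarith
qed

lemma integrable_VCal: "integrable (fh_measure T x) (\<lambda>p. VCal T p x)"
proof -
  interpret prob_space "fh_measure T x"
    by (rule prob_space_fh_measure)
  show ?thesis
    using measurable_VCal abs_VCal_le by (intro integrable_const_bound[where B="2 * real T"]) auto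
qed

lemma fh_deviation_bound:
  assumes "\<And>t. t \<in> {2..T} \<Longrightarrow> 0 \<le> w t \<and> w t \<le> 1"
  obtains H where "integrable (fh_measure T x) H"
    "(\<integral>p. H p \<partial>fh_measure T x) \<le> 19 * sqrt (2 * real T) + 4"
    "\<And>p v. 0 \<le> v \<Longrightarrow> v \<le> 1 \<Longrightarrow> \<bar>\<Sum>t=2..T. w t * fh_sgn_dev T x t p v\<bar> \<le> H p"
proof -
  interpret weighted_empirical_process "{1..T}" "fh_dist T x" "{2..T}" "fh_cdf_core T x" w
  proof (rule weighted_empirical_process.intro)
    fix t u assume "t \<in> {2..T}"
    then have "t \<noteq> 1" by simp
    then show "0 \<le> u \<Longrightarrow> u < 1 \<Longrightarrow> measure (fh_dist T x t) {..u} = fh_cdf_core T x t u"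
      and "0 < u \<Longrightarrow> u \<le> 1 \<Longrightarrow> measure (fh_dist T x t) {..<u} = fh_cdf_core T x t u"
      unfolding measure_fh_dist_atMost measure_fh_dist_lessThan fh_cdf_eq_clamped_cdf
      by (simp_all add: clamped_cdf_def)
  qed (simp_all add: assms prob_space_fh_dist mono_fh_cdf_core isCont_fh_cdf_core)
  have sum_eq: "(\<Sum>t=2..T. w t * fh_sgn_dev T x t p v) = - (dev p {..v} + dev p {..<v})" for p v
  proof -
    have "w t * fh_sgn_dev T x t p v
        = - (w t * (indicator {..v} (p t) - measure (fh_dist T x t) {..v})
             + w t * (indicator {..<v} (p t) - measure (fh_dist T x t) {..<v}))" for t
      unfolding fh_sgn_dev_def fh_sgn_mean_def by (auto simp: sgn_if indicator_def algebra_simps)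
    then show ?thesis
      unfolding dev_def sum.distrib[symmetric] sum_negf[symmetric] by (intro sum.cong refl)
  qed
  have "card {2..T} + 1 = T"
    using T by simp
  show ?thesis
  proof (rule that)
    show "integrable (fh_measure T x) dev_bound"
      unfolding fh_measure_def by (rule integrable_dev_bound)
    show "(\<integral>p. dev_bound p \<partial>fh_measure T x) \<le> 19 * sqrt (2 * real T) + 4"
      using expectation_dev_bound_le \<open>card {2..T} + 1 = T\<close> unfolding fh_measure_def by simp
    fix p and v :: real assume "0 \<le> v" "v \<le> 1"
    then show "\<bar>\<Sum>t=2..T. w t * fh_sgn_dev T x t p v\<bar> \<le> dev_bound p"
      unfolding sum_eq using abs_dev_le_dev_bound[of v p] abs_triangle_ineq[of "dev p {..v}" "dev p {..<v}"]
      by simp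
  qed
qed

lemma Reg_ell_V_split:
  "Reg (ell_V v) T p x
     = ((\<Sum>t=1..T. fh_sgn_mean T x t v * (v - x t)) + \<bar>\<Sum>t=1..T. (v - x t)\<bar>)
       + fh_sgn_dev T x 1 p v * (v - x 1)
       + (v * (\<Sum>t=2..T. fh_sgn_dev T x t p v) - (\<Sum>t=2..T. x t * fh_sgn_dev T x t p v))"
proof -
  have "Reg (ell_V v) T p x
      = ((\<Sum>t=1..T. fh_sgn_mean T x t v * (v - x t)) + \<bar>\<Sum>t=1..T. (v - x t)\<bar>)
        + (\<Sum>t=1..T. fh_sgn_dev T x t p v * (v - x t))"
    unfolding Reg_ell_V_eq[OF T x] signed_regret_def fh_sgn_dev_def
    by (simp add: sum.distrib[symmetric] algebra_simps)
  also have "(\<Sum>t=1..T. fh_sgn_dev T x t p v * (v - x t))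
      = fh_sgn_dev T x 1 p v * (v - x 1) + (\<Sum>t=2..T. fh_sgn_dev T x t p v * (v - x t))"
    using T by (simp add: sum.atLeast_Suc_atMost numeral_2_eq_2)
  also have "(\<Sum>t=2..T. fh_sgn_dev T x t p v * (v - x t))
      = v * (\<Sum>t=2..T. fh_sgn_dev T x t p v) - (\<Sum>t=2..T. x t * fh_sgn_dev T x t p v)"
    by (simp add: sum_distrib_left sum_subtractf[symmetric] algebra_simps)
  finally show ?thesis
    by simp
qed

lemma VCal_le:
  assumes "\<And>v. 0 \<le> v \<Longrightarrow> v \<le> 1 \<Longrightarrow> \<bar>\<Sum>t=2..T. fh_sgn_dev T x t p v\<bar> \<le> H\<^sub>1"
    and "\<And>v. 0 \<le> v \<Longrightarrow> v \<le> 1 \<Longrightarrow> \<bar>\<Sum>t=2..T. x t * fh_sgn_dev T x t p v\<bar> \<le> H\<^sub>x"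
  shows "VCal T p x \<le> 4 + 2 * sqrt (real T) + H\<^sub>1 + H\<^sub>x"
  unfolding VCal_def
proof (rule cSUP_least)
  fix v :: real assume "v \<in> {0..1}"
  then have v: "0 \<le> v" "v \<le> 1" by auto
  have "\<bar>fh_sgn_dev T x 1 p v * (v - x 1)\<bar> \<le> 2 * 1"
    using abs_fh_sgn_dev_le[of T x 1 p v] abs_diff_binary_le_1[of "x 1" v] x T v
    unfolding abs_mult by (intro mult_mono) auto
  moreover have "\<bar>v * (\<Sum>t=2..T. fh_sgn_dev T x t p v)\<bar> \<le> H\<^sub>1"
    using v assms(1)[OF v] mult_left_le_one_le[of "\<bar>\<Sum>t=2..T. fh_sgn_dev T x t p v\<bar>" "\<bar>v\<bar>"]
    unfolding abs_mult by auto
  ultimately show "Reg (ell_V v) T p x \<le> 4 + 2 * sqrt (real T) + H\<^sub>1 + H\<^sub>x"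
    unfolding Reg_ell_V_split using fh_expected_regret_le[OF T x v] assms(2)[OF v]
    by (simp only: abs_le_iff) linarith
qed simp

lemma VCal_integrable_bound:
  obtains H where "integrable (fh_measure T x) H"
    "(\<integral>p. H p \<partial>fh_measure T x) \<le> 38 * sqrt (2 * real T) + 8"
    "\<And>p. VCal T p x \<le> 4 + 2 * sqrt (real T) + H p"
proof -
  interpret prob_space "fh_measure T x"
    by (rule prob_space_fh_measure)
  have "0 \<le> x t \<and> x t \<le> 1" if "t \<in> {2..T}" for t
  proof -
    have "x t \<in> {0, 1}"
      using x that by auto
    then show ?thesis
      by auto
  qed
  then obtain H\<^sub>x where H\<^sub>x: "integrable (fh_measure T x) H\<^sub>x" "expectation H\<^sub>x \<le> 19 * sqrt (2 * real T) + 4"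
    "\<And>p v. 0 \<le> v \<Longrightarrow> v \<le> 1 \<Longrightarrow> \<bar>\<Sum>t=2..T. x t * fh_sgn_dev T x t p v\<bar> \<le> H\<^sub>x p"
    by (rule fh_deviation_bound) (auto intro: that)
  obtain H\<^sub>1 where H\<^sub>1: "integrable (fh_measure T x) H\<^sub>1" "expectation H\<^sub>1 \<le> 19 * sqrt (2 * real T) + 4"
    "\<And>p v. 0 \<le> v \<Longrightarrow> v \<le> 1 \<Longrightarrow> \<bar>\<Sum>t=2..T. 1 * fh_sgn_dev T x t p v\<bar> \<le> H\<^sub>1 p"
    by (rule fh_deviation_bound[where w="\<lambda>_. 1"]) (auto intro: that)
  show ?thesis
  proof (rule that[of "\<lambda>p. H\<^sub>1 p + H\<^sub>x p"])
    show "integrable (fh_measure T x) (\<lambda>p. H\<^sub>1 p + H\<^sub>x p)"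
      using H\<^sub>1(1) H\<^sub>x(1) by simp
    show "expectation (\<lambda>p. H\<^sub>1 p + H\<^sub>x p) \<le> 38 * sqrt (2 * real T) + 8"
      using H\<^sub>1(1,2) H\<^sub>x(1,2) by simp
    show "VCal T p x \<le> 4 + 2 * sqrt (real T) + (H\<^sub>1 p + H\<^sub>x p)" for p
      using VCal_le[of p "H\<^sub>1 p" "H\<^sub>x p"] H\<^sub>1(3) H\<^sub>x(3) by simp
  qed
qed

lemma expectation_VCal_le: "(\<integral>p. VCal T p x \<partial>fh_measure T x) \<le> 71 * sqrt (real T)"
proof -
  interpret prob_space "fh_measure T x"
    by (rule prob_space_fh_measure)
  obtain H where H: "integrable (fh_measure T x) H" "expectation H \<le> 38 * sqrt (2 * real T) + 8"
    "\<And>p. VCal T p x \<le> 4 + 2 * sqrt (real T) + H p"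
    by (rule VCal_integrable_bound) (auto intro: that)
  have "expectation (\<lambda>p. VCal T p x) \<le> expectation (\<lambda>p. 4 + 2 * sqrt (real T) + H p)"
    using integrable_VCal H(1,3) by (intro integral_mono) auto
  also have "\<dots> = 4 + 2 * sqrt (real T) + expectation H"
    using H(1) by (simp add: prob_space)
  also have "\<dots> \<le> 71 * sqrt (real T)"
  proof -
    have "sqrt 2 \<le> sqrt ((3/2)^2)"
      by (intro real_sqrt_le_mono) (simp add: power2_eq_square)
    then have "sqrt 2 * sqrt (real T) \<le> 3/2 * sqrt (real T)"
      by (intro mult_right_mono) auto
    then have "sqrt (2 * real T) \<le> 3/2 * sqrt (real T)"
      by (simp add: real_sqrt_mult)
    moreover have "1 \<le> sqrt (real T)"
      using T by simp
    ultimately show ?thesis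
      using H(2) by linarith
  qed
  finally show ?thesis .
qed

end

theorem theorem4p7:
  shows "\<exists>C::real. \<forall>(T::nat) (x::nat \<Rightarrow> real).
           T \<ge> 1 \<longrightarrow> (\<forall>t\<in>{1..T}. x t \<in> {0, 1}) \<longrightarrow>
           integrable (fh_measure T x) (\<lambda>p. VCal T p x) \<and>
           (\<integral>p. VCal T p x \<partial>fh_measure T x) \<le> C * sqrt (real T)"
proof (intro exI[of _ 71] allI impI conjI)
  fix T :: nat and x :: "nat \<Rightarrow> real"
  assume "T \<ge> 1" "\<forall>t\<in>{1..T}. x t \<in> {0, 1}"
  then show "integrable (fh_measure T x) (\<lambda>p. VCal T p x)"
    and "(\<integral>p. VCal T p x \<partial>fh_measure T x) \<le> 71 * sqrt (real T)"
    by (rule integrable_VCal, rule expectation_VCal_le)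
qed

end
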